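(* Consider the gossip dynamics with stubborn agents and block communication probabilities described in the context, and assume: $0<n_{r1}\le n_1$, $0<n_{r2}\le n_2$; $w_s,w_d>0$, $w_s\ne w_d$, $w_s(n_1^2+n_2^2)+2w_dn_1n_2=1$; the stubborn initial vector $\mathbf{x}^s=[(\mathbf{x}^{s1})^T\ (\mathbf{x}^{s2})^T]^T$ is fixed; $n_{s1},n_{s2}>0$ and $\frac1{n_{s1}}\mathbf{1}^T\mathbf{x}^{s1}\neq\frac1{n_{s2}}\mathbf{1}^T\mathbf{x}^{s2}$; and for every stubborn agent $i$ a regular agent $j_i$ in the same community as $i$ is known. Run the algorithm described in the context. Then: (i) the community detection part converges in finite time: almost surely there is a finite (random) time $T$ and a permutation $\pi$ of $\{1,2\}$ such that $\hat{\mathcal{C}}(i,t)=\pi(\mathcal{C}(i))$ for all $i\in\mathcal{V}$ and all $t\ge T$, where $\mathcal{C}(i)=k$ iff $i\in\mathcal{V}_k$; (ii) the parameter estimation part converges almost surely: $\mathbb{P}\{\lim_{t\to\infty}(\hat w_s(t),\hat w_d(t))=(w_s,w_d)\}=1$.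
   Context: Model: agents $\mathcal{V}=\{1,\dots,n\}$, $n=n_1+n_2$, in two communities $\mathcal{V}_1=\{1,\dots,n_1\}$, $\mathcal{V}_2=\{n_1+1,\dots,n\}$ (the community structure and $n_1,n_2$ are unknown to the algorithm; $n$ is known). Community $k$ has $n_{rk}$ regular agents $\mathcal{V}_{rk}$ and $n_{sk}=n_k-n_{rk}$ stubborn agents $\mathcal{V}_{sk}$; $\mathcal{V}_r=\mathcal{V}_{r1}\cup\mathcal{V}_{r2}$ and $\mathcal{V}_s=\mathcal{V}_{s1}\cup\mathcal{V}_{s2}$ are known. Let $w_{ij}=w_s$ if $i,j$ are in the same community and $w_d$ otherwise. For $i,j\in\mathcal{V}$: $R^{ij}=I-\frac12(\mathbf{e}_i-\mathbf{e}_j)(\mathbf{e}_i-\mathbf{e}_j)^T$ if both regular; $R^{ij}=I-\frac12\mathbf{e}_i(\mathbf{e}_i-\mathbf{e}_j)^T$ if $i$ regular, $j$ stubborn; $R^{ij}=I-\frac12\mathbf{e}_j(\mathbf{e}_j-\mathbf{e}_i)^T$ if $i$ stubborn, $j$ regular; $R^{ij}=I$ if both stubborn. At each $t\in\mathbb{N}$, independently, an ordered pair $(i,j)$ is drawn with probability $w_{ij}$ and $x(t+1)=R^{ij}x(t)$, from a fixed $x(0)$; stubborn states stay constant, $x^s(t)\equiv\mathbf{x}^s$; $x^r(t)$ denotes the vector of regular agents' states. Algorithm (input: the trajectory $x^r(t)$, $\mathbf{x}^s$, and the map $i\mapsto j_i$): initialize $\hat{\mathcal{C}}(i,0),\hat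 w_s(0),\hat w_d(0)$ arbitrarily and $s^r(0)=x^r(0)$. For $t=1,2,\dots$: $s^r(t)=\frac{t}{t+1}s^r(t-1)+\frac1{t+1}x^r(t)$ and $\bar s^r(t)=\frac1{|\mathcal{V}_r|}\mathbf{1}^Ts^r(t)$. Community detection: $\hat{\mathcal{C}}(i,t)=2-\mathbb{I}_{[s^r_i(t)>\bar s^r(t)]}$ for $i\in\mathcal{V}_r$, and $\hat{\mathcal{C}}(i,t)=\hat{\mathcal{C}}(j_i,t)$ for $i\in\mathcal{V}_s$. Let $\hat n_k(t)=|\{i\in\mathcal{V}:\hat{\mathcal{C}}(i,t)=k\}|$, $\hat{\mathcal{V}}_{rk}(t)=\{i\in\mathcal{V}_r:\hat{\mathcal{C}}(i,t)=k\}$, $\hat{\mathcal{V}}_{sk}(t)=\{i\in\mathcal{V}_s:\hat{\mathcal{C}}(i,t)=k\}$, $\beta_1(t)=\frac{|\hat{\mathcal{V}}_{s1}(t)|}{|\hat{\mathcal{V}}_{r1}(t)|}\sum_{i\in\hat{\mathcal{V}}_{r1}(t)}s^r_i(t)-\sum_{i\in\hat{\mathcal{V}}_{s1}(t)}x_i(t)$, $\beta_2(t)=\frac{\hat n_2(t)}{|\hat{\mathcal{V}}_{r1}(t)|}\sum_{i\in\hat{\mathcal{V}}_{r1}(t)}s^r_i(t)-\sum_{i\in\hat{\mathcal{V}}_{r2}(t)}s^r_i(t)-\sum_{i\in\hat{\mathcal{V}}_{s2}(t)}x_i(t)$, $g(t)=\beta_1(t)-\frac{\hat n_1^2(t)+\hat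 n_2^2(t)}{2\hat n_1(t)\hat n_2(t)}\beta_2(t)$. Parameter estimation: $\tilde w_s(t)=\hat w_s(t-1)-\frac1t\,\mathrm{sgn}(g(t))\big(g(t)\hat w_s(t-1)+\frac{\beta_2(t)}{2\hat n_1(t)\hat n_2(t)}\big)$; $\hat w_s(t)=\tilde w_s(t)$ if $|\tilde w_s(t)|<2$ and $\hat w_s(t)=\frac12$ otherwise; $\hat w_d(t)=\frac{1-(\hat n_1^2(t)+\hat n_2^2(t))\hat w_s(t)}{2\hat n_1(t)\hat n_2(t)}$. *)

theory Defs
  imports "HOL-Probability.Probability" "HOL-Combinatorics.Permutations"
begin

(* Agents are 1..n, n = n1 + n2; V1 = {1..n1}, V2 = {n1+1..n1+n2}.
   State vectors are functions nat => real (only indices 1..n matter). *)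

definition comm :: "nat \<Rightarrow> nat \<Rightarrow> nat" where
  "comm n1 i = (if i \<le> n1 then 1 else 2)"

definition wgt :: "nat \<Rightarrow> real \<Rightarrow> real \<Rightarrow> nat \<Rightarrow> nat \<Rightarrow> real" where
  "wgt n1 ws wd i j = (if comm n1 i = comm n1 j then ws else wd)"

definition evec :: "nat \<Rightarrow> nat \<Rightarrow> real" where
  "evec i k = (if k = i then 1 else 0)"

definition gossip_step :: "nat set \<Rightarrow> nat \<Rightarrow> nat \<Rightarrow> (nat \<Rightarrow> real) \<Rightarrow> (nat \<Rightarrow> real)" where
  "gossip_step S i j x = (\<lambda>k.
     if i \<notin> S \<and> j \<notin> S then x k - 1/2 * (evec i k - evec j k) * (x i - x j)
     else if i \<notin> S \<and> j \<in> S then x k - 1/2 * evec i k * (x i - x j)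
     else if i \<in> S \<and> j \<notin> S then x k - 1/2 * evec j k * (x j - x i)
     else x k)"

primrec traj :: "nat set \<Rightarrow> (nat \<Rightarrow> nat \<times> nat) \<Rightarrow> (nat \<Rightarrow> real) \<Rightarrow> nat \<Rightarrow> (nat \<Rightarrow> real)" where
  "traj S I x0 0 = x0"
| "traj S I x0 (Suc t) = gossip_step S (fst (I t)) (snd (I t)) (traj S I x0 t)"

definition Vreg :: "nat \<Rightarrow> nat set \<Rightarrow> nat set" where
  "Vreg n S = {1..n} - S"

(* running averages s^r(t) (computed for all indices; only regular ones are used) *)
primrec sr :: "(nat \<Rightarrow> nat \<Rightarrow> real) \<Rightarrow> nat \<Rightarrow> nat \<Rightarrow> real" where
  "sr X 0 = X 0"
| "sr X (Suc t) = (\<lambda>i. real (Suc t) / real (Suc t + 1) * sr X t i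
                        + 1 / real (Suc t + 1) * X (Suc t) i)"

definition sbar :: "nat \<Rightarrow> nat set \<Rightarrow> (nat \<Rightarrow> nat \<Rightarrow> real) \<Rightarrow> nat \<Rightarrow> real" where
  "sbar n S X t = (\<Sum>i\<in>Vreg n S. sr X t i) / real (card (Vreg n S))"

definition Chat :: "nat \<Rightarrow> nat set \<Rightarrow> (nat \<Rightarrow> nat) \<Rightarrow> (nat \<Rightarrow> nat) \<Rightarrow> (nat \<Rightarrow> nat \<Rightarrow> real)
                     \<Rightarrow> nat \<Rightarrow> nat \<Rightarrow> nat" where
  "Chat n S j C0 X t i =
     (if t = 0 then C0 i
      else if i \<in> S then (if sr X t (j i) > sbar n S X t then 1 else 2)
      else (if sr X t i > sbar n S X t then 1 else 2))"

definition nhat :: "nat \<Rightarrow> nat set \<Rightarrow> (nat \<Rightarrow> nat) \<Rightarrow> (nat \<Rightarrow> nat) \<Rightarrow> (nat \<Rightarrow> nat \<Rightarrow> real)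
                     \<Rightarrow> nat \<Rightarrow> nat \<Rightarrow> real" where
  "nhat n S j C0 X t k = real (card {i\<in>{1..n}. Chat n S j C0 X t i = k})"

definition hVr :: "nat \<Rightarrow> nat set \<Rightarrow> (nat \<Rightarrow> nat) \<Rightarrow> (nat \<Rightarrow> nat) \<Rightarrow> (nat \<Rightarrow> nat \<Rightarrow> real)
                     \<Rightarrow> nat \<Rightarrow> nat \<Rightarrow> nat set" where
  "hVr n S j C0 X t k = {i\<in>Vreg n S. Chat n S j C0 X t i = k}"

definition hVs :: "nat \<Rightarrow> nat set \<Rightarrow> (nat \<Rightarrow> nat) \<Rightarrow> (nat \<Rightarrow> nat) \<Rightarrow> (nat \<Rightarrow> nat \<Rightarrow> real)
                     \<Rightarrow> nat \<Rightarrow> nat \<Rightarrow> nat set" where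
  "hVs n S j C0 X t k = {i\<in>S. Chat n S j C0 X t i = k}"

definition beta1 :: "nat \<Rightarrow> nat set \<Rightarrow> (nat \<Rightarrow> nat) \<Rightarrow> (nat \<Rightarrow> nat) \<Rightarrow> (nat \<Rightarrow> nat \<Rightarrow> real)
                     \<Rightarrow> nat \<Rightarrow> real" where
  "beta1 n S j C0 X t =
     real (card (hVs n S j C0 X t 1)) / real (card (hVr n S j C0 X t 1))
       * (\<Sum>i\<in>hVr n S j C0 X t 1. sr X t i)
     - (\<Sum>i\<in>hVs n S j C0 X t 1. X t i)"

definition beta2 :: "nat \<Rightarrow> nat set \<Rightarrow> (nat \<Rightarrow> nat) \<Rightarrow> (nat \<Rightarrow> nat) \<Rightarrow> (nat \<Rightarrow> nat \<Rightarrow> real)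
                     \<Rightarrow> nat \<Rightarrow> real" where
  "beta2 n S j C0 X t =
     nhat n S j C0 X t 2 / real (card (hVr n S j C0 X t 1))
       * (\<Sum>i\<in>hVr n S j C0 X t 1. sr X t i)
     - (\<Sum>i\<in>hVr n S j C0 X t 2. sr X t i)
     - (\<Sum>i\<in>hVs n S j C0 X t 2. X t i)"

definition gfun :: "nat \<Rightarrow> nat set \<Rightarrow> (nat \<Rightarrow> nat) \<Rightarrow> (nat \<Rightarrow> nat) \<Rightarrow> (nat \<Rightarrow> nat \<Rightarrow> real)
                     \<Rightarrow> nat \<Rightarrow> real" where
  "gfun n S j C0 X t =
     beta1 n S j C0 X t
     - ((nhat n S j C0 X t 1)\<^sup>2 + (nhat n S j C0 X t 2)\<^sup>2)
         / (2 * nhat n S j C0 X t 1 * nhat n S j C0 X t 2) * beta2 n S j C0 X t"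

primrec ws_hat :: "nat \<Rightarrow> nat set \<Rightarrow> (nat \<Rightarrow> nat) \<Rightarrow> (nat \<Rightarrow> nat) \<Rightarrow> real \<Rightarrow> (nat \<Rightarrow> nat \<Rightarrow> real)
                     \<Rightarrow> nat \<Rightarrow> real" where
  "ws_hat n S j C0 ws0 X 0 = ws0"
| "ws_hat n S j C0 ws0 X (Suc t) =
     (let w = ws_hat n S j C0 ws0 X t;
          g = gfun n S j C0 X (Suc t);
          wt = w - 1 / real (Suc t) * sgn g
                 * (g * w + beta2 n S j C0 X (Suc t)
                      / (2 * nhat n S j C0 X (Suc t) 1 * nhat n S j C0 X (Suc t) 2))
      in if \<bar>wt\<bar> < 2 then wt else 1/2)"

definition wd_hat :: "nat \<Rightarrow> nat set \<Rightarrow> (nat \<Rightarrow> nat) \<Rightarrow> (nat \<Rightarrow> nat) \<Rightarrow> real \<Rightarrow> real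
                     \<Rightarrow> (nat \<Rightarrow> nat \<Rightarrow> real) \<Rightarrow> nat \<Rightarrow> real" where
  "wd_hat n S j C0 ws0 wd0 X t =
     (if t = 0 then wd0
      else (1 - ((nhat n S j C0 X t 1)\<^sup>2 + (nhat n S j C0 X t 2)\<^sup>2) * ws_hat n S j C0 ws0 X t)
           / (2 * nhat n S j C0 X t 1 * nhat n S j C0 X t 2))"

end

theory Submission
  imports Defs
begin

(* A regular agent moves by the drift  L_i(x) = sum_j w_ij (x_j - x_i)  plus a noise term whose
   conditional mean is zero and whose increments are bounded. Its fourth moment after t steps
   is O(t^2), so by Borel-Cantelli the accumulated noise is o(t) almost surely, and along such a
   path the drift evaluated at the time averages s^r(t) tends to 0. Summed over each community
   this is a nonsingular 2x2 linear system for the community sums of the averages, so all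
   regular agents of a community converge to a common limit, and the two limits differ because
   the stubborn means differ. Thresholding at the overall average therefore labels the
   communities correctly from some time on. Once the labels are frozen, beta1, beta2 and g
   converge, the limits satisfy  g ws + beta2 / (2 n1 n2) = 0  with g nonzero, and the clipped,
   sign-corrected update of ws contracts towards this root at rate |g| / (2 t); as the harmonic
   series diverges, it converges to ws, and wd follows from the normalisation. *)

section \<open>Real sequences\<close>

lemma harmonic_tail_unbounded: "\<exists>k. (\<Sum>s<k. 1 / real (T + s + 1)) > B"
proof (rule ccontr)
  assume "\<not> ?thesis"
  then have "summable (\<lambda>s. 1 / real (T + s + 1))"
    by (intro summableI_nonneg_bounded[where x = B]) (auto simp: not_less)
  then have "summable (\<lambda>s. inverse (real (s + (T + 1))))"
    by (simp add: divide_inverse add_ac)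
  then have "summable (\<lambda>n. inverse (real n))"
    by (subst (asm) summable_iff_shift)
  then show False
    using not_summable_harmonic[where 'a = real] by simp
qed

lemma relaxation_reaches_level:
  fixes u :: "nat \<Rightarrow> real"
  assumes u_nonneg: "\<And>t. u t \<ge> 0" and c: "c > 0" and a: "a < \<eta>"
    and step: "\<And>t. t \<ge> T \<Longrightarrow> u (Suc t) \<le> (1 - c / real (Suc t)) * u t + c / real (Suc t) * a"
  shows "\<exists>t0\<ge>T. u t0 \<le> \<eta>"
proof (rule ccontr)
  assume "\<not> ?thesis"
  then have above: "\<And>t. t \<ge> T \<Longrightarrow> u t > \<eta>" by (meson not_le)
  have descend: "u (Suc t) \<le> u t - (\<eta> - a) * c * (1 / real (Suc t))" if "t \<ge> T" for t
  proof -
    have "c / real (Suc t) * \<eta> \<le> c / real (Suc t) * u t"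
      using above[OF that] c by (intro mult_left_mono) auto
    then show ?thesis
      using step[OF that] by (simp add: algebra_simps)
  qed
  have decay: "u (T + k) \<le> u T - (\<eta> - a) * c * (\<Sum>s<k. 1 / real (T + s + 1))" for k
  proof (induction k)
    case (Suc k)
    with descend[of "T + k"] show ?case by (simp add: algebra_simps)
  qed simp
  obtain k where "(\<Sum>s<k. 1 / real (T + s + 1)) > u T / ((\<eta> - a) * c)"
    using harmonic_tail_unbounded by blast
  then have "(\<eta> - a) * c * (\<Sum>s<k. 1 / real (T + s + 1)) > u T"
    using a c by (simp add: divide_less_eq mult.commute)
  with decay[of k] u_nonneg[of "T + k"] show False by simp
qed

lemma eventually_le_of_relaxation:
  fixes u :: "nat \<Rightarrow> real"
  assumes u_nonneg: "\<And>t. u t \<ge> 0" and c: "c > 0" and a: "a < \<eta>"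
    and step: "\<And>t. t \<ge> T \<Longrightarrow> u (Suc t) \<le> (1 - c / real (Suc t)) * u t + c / real (Suc t) * a"
    and c_le: "\<And>t. t \<ge> T \<Longrightarrow> c \<le> real (Suc t)"
  shows "\<exists>t0. \<forall>t\<ge>t0. u t \<le> \<eta>"
proof -
  have stay: "u (Suc t) \<le> \<eta>" if "t \<ge> T" "u t \<le> \<eta>" for t
  proof -
    have "(1 - c / real (Suc t)) * u t \<le> (1 - c / real (Suc t)) * \<eta>"
      using that c_le by (intro mult_left_mono) auto
    moreover have "c / real (Suc t) * a \<le> c / real (Suc t) * \<eta>"
      using a c by (intro mult_left_mono) auto
    ultimately show ?thesis
      using step[OF that(1)] by (simp add: algebra_simps)
  qed
  obtain t0 where t0: "t0 \<ge> T" "u t0 \<le> \<eta>"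
    using relaxation_reaches_level[OF u_nonneg c a step] by blast
  have "u t \<le> \<eta>" if "t \<ge> t0" for t
    using that
  proof (induction t rule: dec_induct)
    case (step t)
    then show ?case using stay[of t] t0 by simp
  qed (use t0 in simp)
  then show ?thesis by blast
qed

lemma tendsto_zero_of_relaxation:
  fixes u \<epsilon> :: "nat \<Rightarrow> real"
  assumes u_nonneg: "\<And>t. u t \<ge> 0" and c: "c > 0" and \<epsilon>: "\<epsilon> \<longlonglongrightarrow> 0"
    and step: "\<And>t. t \<ge> T \<Longrightarrow> u (Suc t) \<le> (1 - c / real (Suc t)) * u t + \<epsilon> t / real (Suc t)"
  shows "u \<longlonglongrightarrow> 0"
proof (rule LIMSEQ_I)
  fix r :: real
  assume r: "r > 0"
  have "eventually (\<lambda>t. \<bar>\<epsilon> t\<bar> < c * (r / 4)) sequentially"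
    using tendstoD[OF \<epsilon>, of "c * (r / 4)"] r c by (simp add: dist_real_def)
  moreover have "eventually (\<lambda>t. c \<le> real (Suc t)) sequentially"
  proof -
    obtain N :: nat where "c \<le> real N" using real_arch_simple by blast
    then show ?thesis unfolding eventually_sequentially by (intro exI[of _ N]) auto
  qed
  ultimately have "eventually (\<lambda>t. \<bar>\<epsilon> t\<bar> < c * (r / 4) \<and> c \<le> real (Suc t)) sequentially"
    by (rule eventually_conj)
  then obtain T' where T': "\<And>t. t \<ge> T' \<Longrightarrow> \<bar>\<epsilon> t\<bar> < c * (r / 4) \<and> c \<le> real (Suc t)"
    unfolding eventually_sequentially by blast
  have relax: "u (Suc t) \<le> (1 - c / real (Suc t)) * u t + c / real (Suc t) * (r / 4)"
    if "t \<ge> max T T'" for t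
  proof -
    have "\<epsilon> t / real (Suc t) \<le> c * (r / 4) / real (Suc t)"
      using T'[of t] that by (intro divide_right_mono) auto
    also have "\<dots> = c / real (Suc t) * (r / 4)" by simp
    finally show ?thesis using step[of t] that by linarith
  qed
  have "\<exists>t0. \<forall>t\<ge>t0. u t \<le> r / 2"
    using eventually_le_of_relaxation[where T = "max T T'" and \<eta> = "r / 2", OF u_nonneg c _ relax] r T'
    by auto
  then obtain t0 where "\<forall>t\<ge>t0. u t \<le> r / 2" by blast
  then show "\<exists>t0. \<forall>t\<ge>t0. norm (u t - 0) < r"
    using u_nonneg r by (intro exI[of _ t0]) (auto intro: le_less_trans)
qed

lemma clip_dist_le:
  fixes x w0 :: real
  assumes "\<bar>w0\<bar> \<le> 3/4"
  shows "\<bar>(if \<bar>x\<bar> < 2 then x else 1/2) - w0\<bar> \<le> \<bar>x - w0\<bar>"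
proof -
  have "-3/4 \<le> w0" "w0 \<le> 3/4" using assms by auto
  then show ?thesis by (auto simp: abs_if split: if_split_asm)
qed

lemma sign_corrected_step_le:
  fixes w w0 g h G N :: real
  assumes N: "N > 0" and sgn: "sgn g = sgn G" and lo: "\<bar>G\<bar> / 2 < \<bar>g\<bar>" and hi: "\<bar>g\<bar> \<le> N"
  shows "\<bar>w - 1 / N * sgn g * (g * w + h) - w0\<bar>
           \<le> (1 - (\<bar>G\<bar> / 2) / N) * \<bar>w - w0\<bar> + \<bar>\<bar>g\<bar> * w0 + sgn G * h\<bar> / N"
proof -
  define q where "q = \<bar>g\<bar> / N"
  have q: "0 \<le> q" "q \<le> 1" using N hi by (simp_all add: q_def)
  have q_lo: "(\<bar>G\<bar> / 2) / N \<le> q"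
    unfolding q_def using lo N by (intro divide_right_mono) auto
  have "sgn g * g = \<bar>g\<bar>" by (simp add: abs_sgn mult.commute)
  then have "w - 1 / N * sgn g * (g * w + h) - w0 = (w - w0) * (1 - q) - (\<bar>g\<bar> * w0 + sgn G * h) / N"
    unfolding q_def using N sgn by (simp add: field_simps)
  also have "\<bar>\<dots>\<bar> \<le> \<bar>w - w0\<bar> * (1 - q) + \<bar>\<bar>g\<bar> * w0 + sgn G * h\<bar> / N"
    using q N by (simp add: abs_mult order_trans[OF abs_triangle_ineq4])
  also have "\<bar>w - w0\<bar> * (1 - q) \<le> (1 - (\<bar>G\<bar> / 2) / N) * \<bar>w - w0\<bar>"
    using q_lo by (subst mult.commute) (intro mult_left_mono, auto)
  finally show ?thesis by simp
qed

lemma eventually_sgn_eq: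
  fixes g :: "nat \<Rightarrow> real"
  assumes "g \<longlonglongrightarrow> G" "G \<noteq> 0"
  shows "eventually (\<lambda>t. sgn (g t) = sgn G) sequentially"
proof (cases "G > 0")
  case True
  from order_tendstoD(1)[OF assms(1) True] show ?thesis
    by eventually_elim (use True in simp)
next
  case False
  with assms(2) have "G < 0" by simp
  from order_tendstoD(2)[OF assms(1) this] show ?thesis
    by eventually_elim (use \<open>G < 0\<close> in simp)
qed

lemma clipped_robbins_monro_eventually_contracts:
  fixes w g h :: "nat \<Rightarrow> real"
  assumes rec: "\<And>t. w (Suc t) =
      (let wt = w t - 1 / real (Suc t) * sgn (g (Suc t)) * (g (Suc t) * w t + h (Suc t))
       in if \<bar>wt\<bar> < 2 then wt else 1/2)"
    and g: "g \<longlonglongrightarrow> G" and G: "G \<noteq> 0" and w0: "\<bar>w0\<bar> \<le> 3/4"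
  shows "eventually (\<lambda>t. \<bar>w (Suc t) - w0\<bar> \<le> (1 - (\<bar>G\<bar> / 2) / real (Suc t)) * \<bar>w t - w0\<bar>
           + \<bar>\<bar>g (Suc t)\<bar> * w0 + sgn G * h (Suc t)\<bar> / real (Suc t)) sequentially"
proof -
  have gS: "(\<lambda>t. g (Suc t)) \<longlonglongrightarrow> G"
    using g by (rule LIMSEQ_Suc)
  have "\<bar>G\<bar> / 2 < \<bar>G\<bar>" using G by simp
  then have "eventually (\<lambda>t. \<bar>G\<bar> / 2 < \<bar>g (Suc t)\<bar>) sequentially"
    by (rule order_tendstoD(1)[OF tendsto_rabs[OF gS]])
  moreover have "eventually (\<lambda>t. \<bar>g (Suc t)\<bar> < \<bar>G\<bar> + 1) sequentially"
    by (rule order_tendstoD(2)[OF tendsto_rabs[OF gS]]) simp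
  moreover have "eventually (\<lambda>t. \<bar>G\<bar> + 1 \<le> real (Suc t)) sequentially"
  proof -
    obtain N :: nat where "\<bar>G\<bar> + 1 \<le> real N" using real_arch_simple by blast
    then show ?thesis unfolding eventually_sequentially by (intro exI[of _ N]) auto
  qed
  moreover have "eventually (\<lambda>t. sgn (g (Suc t)) = sgn G) sequentially"
    using eventually_sgn_eq[OF gS G] .
  ultimately show ?thesis
  proof eventually_elim
    case (elim t)
    let ?wt = "w t - 1 / real (Suc t) * sgn (g (Suc t)) * (g (Suc t) * w t + h (Suc t))"
    have "\<bar>w (Suc t) - w0\<bar> \<le> \<bar>?wt - w0\<bar>"
      unfolding rec[of t] Let_def by (rule clip_dist_le[OF w0])
    also have "\<dots> \<le> (1 - (\<bar>G\<bar> / 2) / real (Suc t)) * \<bar>w t - w0\<bar>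
        + \<bar>\<bar>g (Suc t)\<bar> * w0 + sgn G * h (Suc t)\<bar> / real (Suc t)"
      by (rule sign_corrected_step_le) (use elim in auto)
    finally show ?case .
  qed
qed

(* A Robbins-Monro scheme for the root w0 of  G w + H : multiplying by sgn g makes it contract
   towards w0 at rate |G| / (2 t), and the reset to 1/2 only brings it closer to w0. *)
lemma clipped_robbins_monro_tendsto:
  fixes w g h :: "nat \<Rightarrow> real"
  assumes rec: "\<And>t. w (Suc t) =
      (let wt = w t - 1 / real (Suc t) * sgn (g (Suc t)) * (g (Suc t) * w t + h (Suc t))
       in if \<bar>wt\<bar> < 2 then wt else 1/2)"
    and g: "g \<longlonglongrightarrow> G" and G: "G \<noteq> 0" and h: "h \<longlonglongrightarrow> H"
    and root: "G * w0 + H = 0" and w0: "\<bar>w0\<bar> \<le> 3/4"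
  shows "w \<longlonglongrightarrow> w0"
proof -
  define \<epsilon> where "\<epsilon> t = \<bar>\<bar>g (Suc t)\<bar> * w0 + sgn G * h (Suc t)\<bar>" for t
  have "\<epsilon> \<longlonglongrightarrow> \<bar>\<bar>G\<bar> * w0 + sgn G * H\<bar>"
    unfolding \<epsilon>_def using g h by (intro tendsto_intros LIMSEQ_Suc)
  moreover have "\<bar>G\<bar> * w0 + sgn G * H = sgn G * (G * w0 + H)"
    by (simp add: abs_sgn algebra_simps)
  ultimately have \<epsilon>0: "\<epsilon> \<longlonglongrightarrow> 0" using root by simp
  obtain T where "\<And>t. t \<ge> T \<Longrightarrow> \<bar>w (Suc t) - w0\<bar> \<le>
      (1 - (\<bar>G\<bar> / 2) / real (Suc t)) * \<bar>w t - w0\<bar> + \<epsilon> t / real (Suc t)"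
    using clipped_robbins_monro_eventually_contracts[OF rec g G w0]
    unfolding eventually_sequentially \<epsilon>_def by blast
  then have "(\<lambda>t. \<bar>w t - w0\<bar>) \<longlonglongrightarrow> 0"
    using G by (intro tendsto_zero_of_relaxation[OF _ _ \<epsilon>0, of _ "\<bar>G\<bar> / 2" T]) auto
  then show ?thesis
    by (simp add: LIM_zero_iff tendsto_rabs_zero_iff)
qed

lemma LIMSEQ_divide_real_zero:
  fixes f :: "nat \<Rightarrow> real"
  assumes "\<And>m. eventually (\<lambda>t. \<bar>f t\<bar> \<le> real t / real (Suc m)) sequentially"
  shows "(\<lambda>t. f t / real t) \<longlonglongrightarrow> 0"
proof (rule LIMSEQ_I)
  fix r :: real
  assume "r > 0"
  then obtain m :: nat where m: "inverse (real (Suc m)) < r"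
    using reals_Archimedean by blast
  obtain N where N: "\<And>t. t \<ge> N \<Longrightarrow> \<bar>f t\<bar> \<le> real t / real (Suc m)"
    using assms[of m] unfolding eventually_sequentially by blast
  have "norm (f t / real t - 0) < r" if "t \<ge> max N 1" for t
  proof -
    have "\<bar>f t\<bar> / real t \<le> inverse (real (Suc m))"
      using N[of t] that by (simp add: divide_le_eq field_simps)
    with m show ?thesis by simp
  qed
  then show "\<exists>N. \<forall>t\<ge>N. norm (f t / real t - 0) < r" by blast
qed

lemma convergent_of_linear_system:
  fixes u v :: "nat \<Rightarrow> real"
  assumes "(\<lambda>t. a * u t + b * v t) \<longlonglongrightarrow> c" and "(\<lambda>t. a' * u t + b' * v t) \<longlonglongrightarrow> c'"
    and det: "a * b' - b * a' \<noteq> 0"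
  shows "convergent u"
proof -
  have "u = (\<lambda>t. (b' * (a * u t + b * v t) - b * (a' * u t + b' * v t)) / (a * b' - b * a'))"
    using det by (auto simp: field_simps)
  moreover have "(\<lambda>t. (b' * (a * u t + b * v t) - b * (a' * u t + b' * v t)) / (a * b' - b * a'))
      \<longlonglongrightarrow> (b' * c - b * c') / (a * b' - b * a')"
    using assms by (intro tendsto_intros) auto
  ultimately show ?thesis
    unfolding convergent_def by metis
qed

section \<open>Sums of bounded zero-mean increments\<close>

lemma weighted_abs_power_le:
  fixes w Y :: "'a \<Rightarrow> real"
  assumes w_nonneg: "\<And>a. a \<in> P \<Longrightarrow> w a \<ge> 0" and w_sum: "(\<Sum>a\<in>P. w a) = 1"
    and Y_bound: "\<And>a. a \<in> P \<Longrightarrow> \<bar>Y a\<bar> \<le> K"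
  shows "(\<Sum>a\<in>P. w a * \<bar>Y a\<bar> ^ k) \<le> K ^ k"
proof -
  have "(\<Sum>a\<in>P. w a * \<bar>Y a\<bar> ^ k) \<le> (\<Sum>a\<in>P. w a * K ^ k)"
    using w_nonneg Y_bound by (intro sum_mono mult_left_mono power_mono) auto
  also have "\<dots> = K ^ k"
    using w_sum by (simp add: sum_distrib_right[symmetric])
  finally show ?thesis .
qed

context
  fixes P :: "'a set" and w Y :: "'a \<Rightarrow> real" and K :: real
  assumes w_nonneg: "\<And>a. a \<in> P \<Longrightarrow> w a \<ge> 0" and w_sum: "(\<Sum>a\<in>P. w a) = 1"
    and Y_mean: "(\<Sum>a\<in>P. w a * Y a) = 0" and Y_bound: "\<And>a. a \<in> P \<Longrightarrow> \<bar>Y a\<bar> \<le> K"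
begin

lemma abs_moment_le: "(\<Sum>a\<in>P. w a * \<bar>Y a\<bar> ^ k) \<le> K ^ k"
  by (rule weighted_abs_power_le) (fact w_nonneg w_sum Y_bound)+

lemma zero_mean_square_step_le: "(\<Sum>a\<in>P. w a * (x + Y a)^2) \<le> x^2 + K^2"
proof -
  have "(\<Sum>a\<in>P. w a * (x + Y a)^2)
      = x^2 * (\<Sum>a\<in>P. w a) + 2 * x * (\<Sum>a\<in>P. w a * Y a) + (\<Sum>a\<in>P. w a * \<bar>Y a\<bar>^2)"
    by (simp add: power2_eq_square algebra_simps sum.distrib sum_distrib_left)
  then show ?thesis
    using w_sum Y_mean abs_moment_le[of 2] by simp
qed

lemma zero_mean_fourth_power_step_le:
  "(\<Sum>a\<in>P. w a * (x + Y a)^4) \<le> x^4 + 6 * K^2 * x^2 + 4 * \<bar>x\<bar> * K^3 + K^4"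
proof -
  have "(\<Sum>a\<in>P. w a * (x + Y a)^4)
      = x^4 * (\<Sum>a\<in>P. w a) + 4 * x^3 * (\<Sum>a\<in>P. w a * Y a) + 6 * x^2 * (\<Sum>a\<in>P. w a * \<bar>Y a\<bar>^2)
        + 4 * x * (\<Sum>a\<in>P. w a * Y a ^ 3) + (\<Sum>a\<in>P. w a * \<bar>Y a\<bar>^4)"
    by (simp add: eval_nat_numeral algebra_simps sum.distrib sum_distrib_left)
  moreover have "6 * x^2 * (\<Sum>a\<in>P. w a * \<bar>Y a\<bar>^2) \<le> 6 * K^2 * x^2"
    using mult_left_mono[OF abs_moment_le[of 2], of "6 * x^2"] by (simp add: mult.commute)
  moreover have "\<bar>\<Sum>a\<in>P. w a * Y a ^ 3\<bar> \<le> K^3"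
    using sum_abs[of "\<lambda>a. w a * Y a ^ 3" P] abs_moment_le[of 3]
    by (simp add: abs_mult power_abs w_nonneg)
  then have "4 * x * (\<Sum>a\<in>P. w a * Y a ^ 3) \<le> 4 * \<bar>x\<bar> * K^3"
    using abs_ge_self[of "4 * x * (\<Sum>a\<in>P. w a * Y a ^ 3)"]
    by (simp add: abs_mult) (meson abs_ge_zero mult_left_mono order_trans)
  ultimately show ?thesis
    using w_sum Y_mean abs_moment_le[of 4] by simp
qed

end

section \<open>The gossip dynamics\<close>

lemma traj_cong_prefix: "(\<And>s. s < t \<Longrightarrow> p s = q s) \<Longrightarrow> traj S p x0 t = traj S q x0 t"
  by (induction t) auto

lemma gossip_step_cases:
  "gossip_step S a b x k = x k \<or> gossip_step S a b x k = (x k + x a) / 2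
     \<or> gossip_step S a b x k = (x k + x b) / 2"
  unfolding gossip_step_def evec_def by (auto simp: field_simps)

lemma gossip_step_stubborn: "k \<in> S \<Longrightarrow> gossip_step S a b x k = x k"
  unfolding gossip_step_def evec_def by auto

lemma gossip_step_regular:
  "i \<notin> S \<Longrightarrow> gossip_step S a b x i =
     x i + (if a = i then (x b - x i) / 2 else 0) + (if b = i then (x a - x i) / 2 else 0)"
  unfolding gossip_step_def evec_def by (auto simp: field_simps)

lemma traj_stubborn: "k \<in> S \<Longrightarrow> traj S p x0 t k = x0 k"
  by (induction t) (auto simp: gossip_step_stubborn)

lemma wgt_commute: "wgt n1 ws wd i j = wgt n1 ws wd j i"
  unfolding wgt_def by auto

lemma sr_eq_mean: "sr X t k = (\<Sum>s\<le>t. X s k) / real (Suc t)"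
proof (induction t)
  case (Suc t)
  have "sr X (Suc t) k = (\<Sum>s\<le>t. X s k) / real (Suc (Suc t)) + X (Suc t) k / real (Suc (Suc t))"
    by (simp add: Suc)
  then show ?case by (simp add: add_divide_distrib)
qed simp

definition other_comm :: "nat \<Rightarrow> nat" where
  "other_comm k = 3 - k"

(* The simplifier rewrites 1::nat to Suc 0 before matching, hence the third rule. *)
lemma other_comm_simps [simp]: "other_comm 1 = 2" "other_comm 2 = 1"
  and other_comm_Suc_0 [simp]: "other_comm (Suc 0) = 2"
  by (simp_all add: other_comm_def)

lemma comm_cases: "comm n1 i \<in> {1, 2}"
  by (simp add: comm_def)

lemma other_comm_in: "k \<in> {1, 2} \<Longrightarrow> other_comm k \<in> {1, 2}"
  and other_comm_other_comm: "k \<in> {1, 2} \<Longrightarrow> other_comm (other_comm k) = k"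
  by (auto simp: other_comm_def)

lemma sum_pair_other_comm: "k \<in> {1, 2} \<Longrightarrow> (\<Sum>l\<in>{1, 2}. f l) = f k + f (other_comm k)"
  by (auto simp: other_comm_def add.commute)

locale gossip_weights =
  fixes n1 n2 :: nat and S :: "nat set" and ws wd :: real and x0 :: "nat \<Rightarrow> real"
  assumes ws_pos: "ws > 0" and wd_pos: "wd > 0"
    and weights_normalized: "ws * (real n1 ^ 2 + real n2 ^ 2) + 2 * wd * real n1 * real n2 = 1"
begin

definition community :: "nat \<Rightarrow> nat set" where
  "community k = {i \<in> {1..n1+n2}. comm n1 i = k}"

lemma community_simps: "community 1 = {1..n1}" "community 2 = {n1+1..n1+n2}"
  unfolding community_def comm_def by auto

lemma card_community: "card (community 1) = n1" "card (community 2) = n2"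
  unfolding community_simps by simp_all

lemma community_partition:
  assumes "c \<in> {1, 2}"
  shows "{1..n1+n2} = community c \<union> community (other_comm c)"
    and "community c \<inter> community (other_comm c) = {}"
proof -
  from assms consider "c = 1" | "c = 2" by blast
  then have "community c = {1..n1} \<and> community (other_comm c) = {n1+1..n1+n2}
      \<or> community c = {n1+1..n1+n2} \<and> community (other_comm c) = {1..n1}"
    by cases (simp_all only: other_comm_simps community_simps simp_thms)
  then show "{1..n1+n2} = community c \<union> community (other_comm c)"
    and "community c \<inter> community (other_comm c) = {}"
    by auto
qed

lemma sum_wgt_mult:
  assumes "i \<in> {1..n1+n2}"
  shows "(\<Sum>j\<in>{1..n1+n2}. wgt n1 ws wd i j * x j)
       = ws * (\<Sum>j\<in>community (comm n1 i). x j) + wd * (\<Sum>j\<in>community (other_comm (comm n1 i)). x j)"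
proof -
  let ?c = "comm n1 i" and ?f = "\<lambda>j. wgt n1 ws wd i j * x j"
  have "sum ?f {1..n1+n2} = sum ?f (community ?c) + sum ?f (community (other_comm ?c))"
    unfolding community_partition(1)[OF comm_cases[of n1 i]]
    using community_partition(2)[OF comm_cases[of n1 i]]
    by (intro sum.union_disjoint) (simp_all add: community_def)
  moreover have "sum ?f (community ?c) = ws * (\<Sum>j\<in>community ?c. x j)"
    by (simp add: sum_distrib_left community_def wgt_def)
  moreover have other: "?c \<noteq> comm n1 j" if "j \<in> community (other_comm ?c)" for j
    using that comm_cases[of n1 i] by (auto simp: community_def other_comm_def)
  then have "sum ?f (community (other_comm ?c)) = wd * (\<Sum>j\<in>community (other_comm ?c). x j)"
    unfolding sum_distrib_left by (intro sum.cong refl) (simp add: wgt_def other)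
  ultimately show ?thesis by simp
qed

lemma finite_community: "finite (community k)"
  by (simp add: community_def)

definition degree :: "nat \<Rightarrow> real" where
  "degree k = ws * card (community k) + wd * card (community (other_comm k))"

lemma sum_wgt: "i \<in> {1..n1+n2} \<Longrightarrow> (\<Sum>j\<in>{1..n1+n2}. wgt n1 ws wd i j) = degree (comm n1 i)"
  using sum_wgt_mult[of i "\<lambda>_. 1"] by (simp add: degree_def)

lemma sum_over_communities:
  "(\<Sum>i\<in>{1..n1+n2}. f i) = (\<Sum>i\<in>community 1. f i) + (\<Sum>i\<in>community 2. f i)"
  using community_partition[of 1] by (simp add: sum.union_disjoint finite_community other_comm_def)

definition drift :: "nat \<Rightarrow> (nat \<Rightarrow> real) \<Rightarrow> real" where
  "drift i x = (\<Sum>j\<in>{1..n1+n2}. wgt n1 ws wd i j * (x j - x i))"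

lemma drift_eq:
  assumes "i \<in> {1..n1+n2}"
  shows "drift i x = ws * (\<Sum>j\<in>community (comm n1 i). x j)
      + wd * (\<Sum>j\<in>community (other_comm (comm n1 i)). x j) - degree (comm n1 i) * x i"
proof -
  have "drift i x = (\<Sum>j\<in>{1..n1+n2}. wgt n1 ws wd i j * x j) - (\<Sum>j\<in>{1..n1+n2}. wgt n1 ws wd i j) * x i"
    unfolding drift_def by (simp add: algebra_simps sum_subtractf sum_distrib_left)
  then show ?thesis
    unfolding sum_wgt_mult[OF assms] sum_wgt[OF assms] .
qed

definition pairs :: "(nat \<times> nat) set" where
  "pairs = {1..n1+n2} \<times> {1..n1+n2}"

definition pair_prob :: "nat \<times> nat \<Rightarrow> real" where
  "pair_prob a = wgt n1 ws wd (fst a) (snd a)"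

lemma finite_pairs: "finite pairs"
  by (simp add: pairs_def)

lemma pair_prob_nonneg: "pair_prob a \<ge> 0"
  unfolding pair_prob_def wgt_def using ws_pos wd_pos by auto

lemma sum_pair_prob: "(\<Sum>a\<in>pairs. pair_prob a) = 1"
proof -
  have "(\<Sum>a\<in>pairs. pair_prob a) = (\<Sum>i\<in>{1..n1+n2}. \<Sum>j\<in>{1..n1+n2}. wgt n1 ws wd i j)"
    unfolding pairs_def pair_prob_def by (simp add: sum.cartesian_product case_prod_unfold)
  also have "\<dots> = (\<Sum>i\<in>{1..n1+n2}. degree (comm n1 i))"
    by (intro sum.cong refl sum_wgt)
  also have "\<dots> = (\<Sum>i\<in>community 1. degree 1) + (\<Sum>i\<in>community 2. degree 2)"
    unfolding sum_over_communities
    by (intro arg_cong2[where f = "(+)"] sum.cong) (auto simp: community_def)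
  also have "\<dots> = 1"
    using weights_normalized unfolding sum_constant degree_def other_comm_simps card_community
    by (simp add: power2_eq_square algebra_simps)
  finally show ?thesis .
qed

abbreviation state :: "(nat \<Rightarrow> nat \<times> nat) \<Rightarrow> nat \<Rightarrow> nat \<Rightarrow> real" where
  "state p t \<equiv> traj S p x0 t"

definition state_bound :: real where
  "state_bound = (\<Sum>k\<in>{1..n1+n2}. \<bar>x0 k\<bar>)"

lemma state_bound_nonneg: "state_bound \<ge> 0"
  unfolding state_bound_def by (simp add: sum_nonneg)

lemma abs_state_le:
  assumes "\<And>s. s < t \<Longrightarrow> p s \<in> pairs" and "k \<in> {1..n1+n2}"
  shows "\<bar>state p t k\<bar> \<le> state_bound"
  using assms
proof (induction t arbitrary: k)
  case 0
  then show ?case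
    unfolding state_bound_def by (auto intro!: member_le_sum)
next
  case (Suc t)
  then have "\<bar>state p t (fst (p t))\<bar> \<le> state_bound" "\<bar>state p t (snd (p t))\<bar> \<le> state_bound"
    "\<bar>state p t k\<bar> \<le> state_bound"
    by (auto simp: pairs_def mem_Times_iff)
  then show ?case
    using gossip_step_cases[of S "fst (p t)" "snd (p t)" "state p t" k] by auto
qed

lemma abs_state_increment_le:
  assumes "\<And>s. s \<le> t \<Longrightarrow> p s \<in> pairs" and "k \<in> {1..n1+n2}"
  shows "\<bar>state p (Suc t) k - state p t k\<bar> \<le> state_bound"
proof -
  have "\<bar>state p t (fst (p t))\<bar> \<le> state_bound" "\<bar>state p t (snd (p t))\<bar> \<le> state_bound"
    "\<bar>state p t k\<bar> \<le> state_bound"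
    using assms by (auto simp: pairs_def mem_Times_iff intro!: abs_state_le)
  then show ?thesis
    using gossip_step_cases[of S "fst (p t)" "snd (p t)" "state p t" k] by auto
qed

lemma abs_drift_le:
  assumes "\<And>k. k \<in> {1..n1+n2} \<Longrightarrow> \<bar>x k\<bar> \<le> state_bound" and "i \<in> {1..n1+n2}"
  shows "\<bar>drift i x\<bar> \<le> 2 * state_bound * real (n1+n2) * (ws + wd)"
proof -
  have "\<bar>drift i x\<bar> \<le> (\<Sum>j\<in>{1..n1+n2}. \<bar>wgt n1 ws wd i j\<bar> * \<bar>x j - x i\<bar>)"
    unfolding drift_def abs_mult[symmetric] by (rule sum_abs)
  also have "\<dots> \<le> (\<Sum>j\<in>{1..n1+n2}. (ws + wd) * (2 * state_bound))"
  proof (rule sum_mono)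
    fix j
    assume "j \<in> {1..n1+n2}"
    then have "\<bar>x j - x i\<bar> \<le> 2 * state_bound"
      using assms(1)[of j] assms(1)[OF assms(2)] by linarith
    moreover have "\<bar>wgt n1 ws wd i j\<bar> \<le> ws + wd"
      unfolding wgt_def using ws_pos wd_pos by auto
    ultimately show "\<bar>wgt n1 ws wd i j\<bar> * \<bar>x j - x i\<bar> \<le> (ws + wd) * (2 * state_bound)"
      by (intro mult_mono) auto
  qed
  finally show ?thesis by (simp add: algebra_simps)
qed

definition noise :: "nat \<Rightarrow> nat \<Rightarrow> (nat \<Rightarrow> nat \<times> nat) \<Rightarrow> real" where
  "noise i s p = state p (Suc s) i - state p s i - drift i (state p s)"

definition noise_sum :: "nat \<Rightarrow> nat \<Rightarrow> (nat \<Rightarrow> nat \<times> nat) \<Rightarrow> real" where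
  "noise_sum i t p = (\<Sum>s<t. noise i s p)"

definition noise_bound :: real where
  "noise_bound = state_bound + 2 * state_bound * real (n1+n2) * (ws + wd)"

lemma noise_bound_nonneg: "noise_bound \<ge> 0"
  unfolding noise_bound_def using state_bound_nonneg ws_pos wd_pos by simp

lemma abs_noise_le:
  assumes "\<And>s'. s' \<le> s \<Longrightarrow> p s' \<in> pairs" and "i \<in> {1..n1+n2}"
  shows "\<bar>noise i s p\<bar> \<le> noise_bound"
proof -
  have "\<bar>drift i (state p s)\<bar> \<le> 2 * state_bound * real (n1+n2) * (ws + wd)"
    using assms by (intro abs_drift_le abs_state_le) auto
  then show ?thesis
    using abs_state_increment_le[of s p i] assms unfolding noise_def noise_bound_def by fastforce
qed

lemma noise_cong_prefix: "(\<And>s'. s' \<le> s \<Longrightarrow> p s' = q s') \<Longrightarrow> noise i s p = noise i s q"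
proof -
  assume same: "\<And>s'. s' \<le> s \<Longrightarrow> p s' = q s'"
  have "state p s = state q s" "state p (Suc s) = state q (Suc s)"
    by (rule traj_cong_prefix, simp add: same less_Suc_eq_le)+
  then show ?thesis unfolding noise_def by simp
qed

lemma noise_sum_cong_prefix: "(\<And>s. s < t \<Longrightarrow> p s = q s) \<Longrightarrow> noise_sum i t p = noise_sum i t q"
  unfolding noise_sum_def by (intro sum.cong refl noise_cong_prefix) auto

lemma abs_noise_sum_le:
  assumes "\<And>s. s < t \<Longrightarrow> p s \<in> pairs" and "i \<in> {1..n1+n2}"
  shows "\<bar>noise_sum i t p\<bar> \<le> noise_bound * t"
proof -
  have "\<bar>noise_sum i t p\<bar> \<le> (\<Sum>s<t. \<bar>noise i s p\<bar>)"
    unfolding noise_sum_def by (rule sum_abs)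
  also have "\<dots> \<le> (\<Sum>s<t. noise_bound)"
    using assms by (intro sum_mono abs_noise_le) auto
  finally show ?thesis by (simp add: mult.commute)
qed

lemma expected_gossip_step:
  assumes "i \<notin> S" and "i \<in> {1..n1+n2}"
  shows "(\<Sum>a\<in>pairs. pair_prob a * gossip_step S (fst a) (snd a) x i) = x i + drift i x"
proof -
  let ?half = "\<lambda>j. wgt n1 ws wd i j * ((x j - x i) / 2)"
  have "(\<Sum>a\<in>pairs. pair_prob a * (if fst a = i then (x (snd a) - x i) / 2 else 0))
      = (\<Sum>a\<in>{1..n1+n2}. \<Sum>b\<in>{1..n1+n2}. wgt n1 ws wd a b * (if a = i then (x b - x i) / 2 else 0))"
    unfolding pairs_def pair_prob_def by (simp add: sum.cartesian_product case_prod_unfold)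
  also have "\<dots> = sum ?half {1..n1+n2}"
    using assms(2) by (simp add: if_distrib sum.If_cases)
  finally have out: "(\<Sum>a\<in>pairs. pair_prob a * (if fst a = i then (x (snd a) - x i) / 2 else 0))
      = sum ?half {1..n1+n2}" .
  have "(\<Sum>a\<in>pairs. pair_prob a * (if snd a = i then (x (fst a) - x i) / 2 else 0))
      = (\<Sum>a\<in>{1..n1+n2}. \<Sum>b\<in>{1..n1+n2}. wgt n1 ws wd a b * (if b = i then (x a - x i) / 2 else 0))"
    unfolding pairs_def pair_prob_def by (simp add: sum.cartesian_product case_prod_unfold)
  also have "\<dots> = sum ?half {1..n1+n2}"
    using assms(2) by (simp add: if_distrib sum.If_cases wgt_commute)
  finally have into: "(\<Sum>a\<in>pairs. pair_prob a * (if snd a = i then (x (fst a) - x i) / 2 else 0))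
      = sum ?half {1..n1+n2}" .
  have "(\<Sum>a\<in>pairs. pair_prob a * gossip_step S (fst a) (snd a) x i)
      = (\<Sum>a\<in>pairs. pair_prob a * x i)
        + (\<Sum>a\<in>pairs. pair_prob a * (if fst a = i then (x (snd a) - x i) / 2 else 0))
        + (\<Sum>a\<in>pairs. pair_prob a * (if snd a = i then (x (fst a) - x i) / 2 else 0))"
    unfolding gossip_step_regular[OF assms(1)] sum.distrib[symmetric] by (simp add: algebra_simps)
  also have "(\<Sum>a\<in>pairs. pair_prob a * x i) = x i"
    using sum_pair_prob by (simp add: sum_distrib_right[symmetric])
  also have "drift i x = sum ?half {1..n1+n2} + sum ?half {1..n1+n2}"
    unfolding drift_def sum.distrib[symmetric] by (rule sum.cong) (auto simp: field_simps)
  ultimately show ?thesis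
    unfolding out into by simp
qed

section \<open>Moments of the noise under the sampling law\<close>

definition path_expectation :: "nat \<Rightarrow> ((nat \<Rightarrow> nat \<times> nat) \<Rightarrow> real) \<Rightarrow> real" where
  "path_expectation t f = (\<Sum>p\<in>PiE {..<t} (\<lambda>_. pairs). (\<Prod>s<t. pair_prob (p s)) * f p)"

lemma path_expectation_Suc:
  "path_expectation (Suc t) f = path_expectation t (\<lambda>q. \<Sum>a\<in>pairs. pair_prob a * f (q(t := a)))"
proof -
  let ?T = "PiE {..<t} (\<lambda>_. pairs)"
  have "path_expectation (Suc t) f
      = (\<Sum>(a, q)\<in>pairs \<times> ?T. (\<Prod>s\<in>insert t {..<t}. pair_prob ((q(t := a)) s)) * f (q(t := a)))"
    unfolding path_expectation_def lessThan_Suc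
    by (intro sum.reindex_bij_witness[of _ "\<lambda>(a, q). q(t := a)" "\<lambda>p. (p t, p(t := undefined))"])
       (auto simp: PiE_def extensional_def)
  also have "\<dots> = (\<Sum>(a, q)\<in>pairs \<times> ?T. pair_prob a * (\<Prod>s<t. pair_prob (q s)) * f (q(t := a)))"
    by (intro sum.cong refl) (auto intro!: prod.cong)
  also have "\<dots> = (\<Sum>q\<in>?T. \<Sum>a\<in>pairs. pair_prob a * (\<Prod>s<t. pair_prob (q s)) * f (q(t := a)))"
    by (subst sum.cartesian_product[symmetric]) (rule sum.swap)
  also have "\<dots> = path_expectation t (\<lambda>q. \<Sum>a\<in>pairs. pair_prob a * f (q(t := a)))"
    unfolding path_expectation_def by (intro sum.cong refl) (simp add: sum_distrib_left algebra_simps)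
  finally show ?thesis .
qed

lemma path_expectation_mono:
  "(\<And>p. p \<in> PiE {..<t} (\<lambda>_. pairs) \<Longrightarrow> f p \<le> g p) \<Longrightarrow> path_expectation t f \<le> path_expectation t g"
  unfolding path_expectation_def by (intro sum_mono mult_left_mono prod_nonneg pair_prob_nonneg) auto

lemma path_expectation_add:
  "path_expectation t (\<lambda>p. f p + g p) = path_expectation t f + path_expectation t g"
  unfolding path_expectation_def by (simp add: sum.distrib algebra_simps)

lemma path_expectation_cmult: "path_expectation t (\<lambda>p. c * f p) = c * path_expectation t f"
  unfolding path_expectation_def by (simp add: sum_distrib_left algebra_simps)

lemma path_expectation_const: "path_expectation t (\<lambda>_. c) = c"
proof (induction t)
  case 0
  then show ?case by (simp add: path_expectation_def)
next
  case (Suc t)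
  have average: "(\<lambda>q. \<Sum>a\<in>pairs. pair_prob a * c) = (\<lambda>_. c)"
    using sum_pair_prob by (simp add: sum_distrib_right[symmetric])
  show ?case
    unfolding path_expectation_Suc average by (rule Suc)
qed

lemma noise_zero_mean:
  assumes "i \<notin> S" and "i \<in> {1..n1+n2}"
  shows "(\<Sum>a\<in>pairs. pair_prob a * noise i t (q(t := a))) = 0"
proof -
  have "state (q(t := a)) t = state q t" for a
    by (rule traj_cong_prefix) simp
  then have "noise i t (q(t := a))
      = gossip_step S (fst a) (snd a) (state q t) i - (state q t i + drift i (state q t))" for a
    by (simp add: noise_def)
  then have "(\<Sum>a\<in>pairs. pair_prob a * noise i t (q(t := a)))
      = (\<Sum>a\<in>pairs. pair_prob a * gossip_step S (fst a) (snd a) (state q t) i)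
        - (\<Sum>a\<in>pairs. pair_prob a) * (state q t i + drift i (state q t))"
    by (simp add: sum_subtractf sum_distrib_right right_diff_distrib)
  then show ?thesis
    by (simp add: expected_gossip_step[OF assms] sum_pair_prob)
qed

lemma path_expectation_noise_sum_Suc:
  "path_expectation (Suc t) (\<lambda>p. f (noise_sum i (Suc t) p))
     = path_expectation t (\<lambda>q. \<Sum>a\<in>pairs. pair_prob a * f (noise_sum i t q + noise i t (q(t := a))))"
proof -
  have "noise_sum i t (q(t := a)) = noise_sum i t q" for q a
    by (rule noise_sum_cong_prefix) simp
  then show ?thesis
    by (simp add: path_expectation_Suc noise_sum_def)
qed

context
  fixes i
  assumes regular: "i \<notin> S" "i \<in> {1..n1+n2}"
begin

lemma abs_noise_fun_upd_le:
  "q \<in> PiE {..<t} (\<lambda>_. pairs) \<Longrightarrow> a \<in> pairs \<Longrightarrow> \<bar>noise i t (q(t := a))\<bar> \<le> noise_bound"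
  using regular by (intro abs_noise_le) (auto simp: PiE_iff)

lemma noise_sum_second_moment: "path_expectation t (\<lambda>p. (noise_sum i t p)^2) \<le> noise_bound^2 * t"
proof (induction t)
  case 0
  then show ?case by (simp add: path_expectation_def noise_sum_def)
next
  case (Suc t)
  have "path_expectation (Suc t) (\<lambda>p. (noise_sum i (Suc t) p)^2)
      \<le> path_expectation t (\<lambda>q. (noise_sum i t q)^2 + noise_bound^2)"
    unfolding path_expectation_noise_sum_Suc[where f = "\<lambda>x. x^2"]
    by (intro path_expectation_mono zero_mean_square_step_le pair_prob_nonneg sum_pair_prob
        noise_zero_mean[OF regular] abs_noise_fun_upd_le)
  also have "\<dots> \<le> noise_bound^2 * Suc t"
    using Suc by (simp add: path_expectation_add path_expectation_const algebra_simps)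
  finally show ?case .
qed

lemma noise_sum_fourth_moment:
  "path_expectation t (\<lambda>p. (noise_sum i t p)^4) \<le> 10 * noise_bound^4 * (real t)^2"
proof (induction t)
  case 0
  then show ?case by (simp add: path_expectation_def noise_sum_def)
next
  case (Suc t)
  let ?K = noise_bound
  have "path_expectation (Suc t) (\<lambda>p. (noise_sum i (Suc t) p)^4)
      \<le> path_expectation t (\<lambda>q. (noise_sum i t q)^4 + 6 * ?K^2 * (noise_sum i t q)^2
            + 4 * \<bar>noise_sum i t q\<bar> * ?K^3 + ?K^4)"
    unfolding path_expectation_noise_sum_Suc[where f = "\<lambda>x. x^4"]
    by (intro path_expectation_mono zero_mean_fourth_power_step_le pair_prob_nonneg sum_pair_prob
        noise_zero_mean[OF regular] abs_noise_fun_upd_le)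
  also have "\<dots> \<le> path_expectation t (\<lambda>q. (noise_sum i t q)^4 + 6 * ?K^2 * (noise_sum i t q)^2
            + (4 * ?K^4 * t + ?K^4))"
  proof (rule path_expectation_mono)
    fix q
    assume "q \<in> PiE {..<t} (\<lambda>_. pairs)"
    then have "\<bar>noise_sum i t q\<bar> \<le> ?K * t"
      using regular by (intro abs_noise_sum_le) (auto simp: PiE_iff)
    then have "4 * \<bar>noise_sum i t q\<bar> * ?K^3 \<le> 4 * (?K * t) * ?K^3"
      using noise_bound_nonneg by (intro mult_right_mono mult_left_mono) auto
    then show "(noise_sum i t q)^4 + 6 * ?K^2 * (noise_sum i t q)^2 + 4 * \<bar>noise_sum i t q\<bar> * ?K^3 + ?K^4
        \<le> (noise_sum i t q)^4 + 6 * ?K^2 * (noise_sum i t q)^2 + (4 * ?K^4 * t + ?K^4)"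
      by (simp add: eval_nat_numeral algebra_simps)
  qed
  also have "\<dots> = path_expectation t (\<lambda>q. (noise_sum i t q)^4)
      + 6 * ?K^2 * path_expectation t (\<lambda>q. (noise_sum i t q)^2) + (4 * ?K^4 * t + ?K^4)"
    by (simp add: path_expectation_add path_expectation_cmult path_expectation_const)
  also have "\<dots> \<le> 10 * ?K^4 * (real t)^2 + 6 * ?K^2 * (?K^2 * t) + (4 * ?K^4 * t + ?K^4)"
    using Suc noise_sum_second_moment[of t] by (intro add_mono mult_left_mono) auto
  also have "\<dots> \<le> 10 * ?K^4 * (real (Suc t))^2"
  proof -
    have "6 * ?K^2 * (?K^2 * t) = 6 * (?K^4 * t)"
      by (simp add: eval_nat_numeral)
    moreover have "10 * ?K^4 * (real (Suc t))^2 = 10 * ?K^4 * (real t)^2 + 20 * (?K^4 * t) + 10 * ?K^4"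
      by (simp add: power2_eq_square algebra_simps)
    moreover have "?K^4 * t \<ge> 0" "?K^4 \<ge> 0"
      using noise_bound_nonneg by auto
    ultimately show ?thesis by linarith
  qed
  finally show ?case .
qed

end

end

section \<open>Almost sure behaviour of the noise\<close>

locale gossip_process = gossip_weights n1 n2 S ws wd x0 + prob_space M
  for n1 n2 S ws wd x0 and M :: "'w measure" +
  fixes I :: "nat \<Rightarrow> 'w \<Rightarrow> nat \<times> nat"
  assumes indep: "indep_vars (\<lambda>_. count_space UNIV) I UNIV"
    and pair_distribution: "\<And>t a b. a \<in> {1..n1+n2} \<Longrightarrow> b \<in> {1..n1+n2} \<Longrightarrow>
           measure M {\<omega>\<in>space M. I t \<omega> = (a, b)} = wgt n1 ws wd a b"
begin

lemma sets_pair_eq: "{\<omega>\<in>space M. I t \<omega> = c} \<in> sets M"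
proof -
  have "I t \<in> measurable M (count_space UNIV)"
    using indep unfolding indep_vars_def by auto
  then have "I t -` {c} \<inter> space M \<in> sets M"
    by (rule measurable_sets) simp
  moreover have "{\<omega>\<in>space M. I t \<omega> = c} = I t -` {c} \<inter> space M" by auto
  ultimately show ?thesis by simp
qed

lemma prob_pair_eq: "c \<in> pairs \<Longrightarrow> prob {\<omega>\<in>space M. I t \<omega> = c} = pair_prob c"
  unfolding pairs_def pair_prob_def by (cases c) (auto simp: pair_distribution)

lemma sets_prefix_eq: "{\<omega>\<in>space M. \<forall>s\<in>{..<t}. I s \<omega> = p s} \<in> sets M"
  by (rule sets.sets_Collect_finite_All) (auto intro: sets_pair_eq)

lemma prob_prefix_eq:
  assumes "p \<in> PiE {..<t} (\<lambda>_. pairs)"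
  shows "prob {\<omega>\<in>space M. \<forall>s\<in>{..<t}. I s \<omega> = p s} = (\<Prod>s<t. pair_prob (p s))"
proof (cases "t = 0")
  case True
  then show ?thesis by (simp add: prob_space)
next
  case False
  let ?A = "\<lambda>s. I s -` {p s} \<inter> space M"
  have "{\<omega>\<in>space M. \<forall>s\<in>{..<t}. I s \<omega> = p s} = (\<Inter>s\<in>{..<t}. ?A s)"
    using False by auto
  moreover have "prob (\<Inter>s\<in>{..<t}. ?A s) = (\<Prod>s\<in>{..<t}. prob (?A s))"
    using False by (intro indep_setsD[OF indep[unfolded indep_vars_def2, THEN conjunct2]]) auto
  moreover have "prob (?A s) = pair_prob (p s)" if "s \<in> {..<t}" for s
  proof -
    have "?A s = {\<omega>\<in>space M. I s \<omega> = p s}" by auto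
    moreover have "p s \<in> pairs" using that assms by auto
    ultimately show ?thesis by (simp add: prob_pair_eq)
  qed
  ultimately show ?thesis by simp
qed

lemma prefix_in_eq_Union:
  assumes "A \<subseteq> PiE {..<t} (\<lambda>_. pairs)"
  shows "{\<omega>\<in>space M. restrict (\<lambda>s. I s \<omega>) {..<t} \<in> A}
       = (\<Union>p\<in>A. {\<omega>\<in>space M. \<forall>s\<in>{..<t}. I s \<omega> = p s})"
proof (intro set_eqI iffI)
  fix \<omega>
  assume "\<omega> \<in> (\<Union>p\<in>A. {\<omega>\<in>space M. \<forall>s\<in>{..<t}. I s \<omega> = p s})"
  then obtain p where p: "p \<in> A" "\<omega> \<in> space M" "\<forall>s\<in>{..<t}. I s \<omega> = p s" by auto
  then have "restrict (\<lambda>s. I s \<omega>) {..<t} = p"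
    using assms by (auto simp: PiE_def extensional_def fun_eq_iff)
  with p show "\<omega> \<in> {\<omega>\<in>space M. restrict (\<lambda>s. I s \<omega>) {..<t} \<in> A}" by auto
next
  fix \<omega>
  assume "\<omega> \<in> {\<omega>\<in>space M. restrict (\<lambda>s. I s \<omega>) {..<t} \<in> A}"
  then show "\<omega> \<in> (\<Union>p\<in>A. {\<omega>\<in>space M. \<forall>s\<in>{..<t}. I s \<omega> = p s})"
    by (intro UN_I[of "restrict (\<lambda>s. I s \<omega>) {..<t}"]) auto
qed

lemma finite_paths: "finite (PiE {..<t::nat} (\<lambda>_. pairs))"
  by (simp add: finite_PiE finite_pairs)

lemma prob_prefix_in:
  assumes A: "A \<subseteq> PiE {..<t} (\<lambda>_. pairs)"
  shows "prob {\<omega>\<in>space M. restrict (\<lambda>s. I s \<omega>) {..<t} \<in> A}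
       = path_expectation t (\<lambda>p. if p \<in> A then 1 else 0)"
proof -
  have fin: "finite A" using A finite_paths finite_subset by blast
  have disj: "disjoint_family_on (\<lambda>p. {\<omega>\<in>space M. \<forall>s\<in>{..<t}. I s \<omega> = p s}) A"
    unfolding disjoint_family_on_def
  proof (intro ballI impI)
    fix p q
    assume "p \<in> A" "q \<in> A" "p \<noteq> q"
    then have "p \<in> PiE {..<t} (\<lambda>_. pairs)" "q \<in> PiE {..<t} (\<lambda>_. pairs)"
      using A by auto
    then obtain s where "s < t" "p s \<noteq> q s"
      using \<open>p \<noteq> q\<close> by (metis PiE_ext lessThan_iff)
    then show "{\<omega>\<in>space M. \<forall>s\<in>{..<t}. I s \<omega> = p s} \<inter> {\<omega>\<in>space M. \<forall>s\<in>{..<t}. I s \<omega> = q s} = {}"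
      by auto
  qed
  have "prob {\<omega>\<in>space M. restrict (\<lambda>s. I s \<omega>) {..<t} \<in> A}
      = (\<Sum>p\<in>A. prob {\<omega>\<in>space M. \<forall>s\<in>{..<t}. I s \<omega> = p s})"
    unfolding prefix_in_eq_Union[OF A]
    by (rule measure_finite_Union[OF fin _ disj]) (auto simp: sets_prefix_eq emeasure_eq_measure)
  also have "\<dots> = (\<Sum>p\<in>A. \<Prod>s<t. pair_prob (p s))"
    using A by (intro sum.cong refl prob_prefix_eq) auto
  also have "\<dots> = (\<Sum>p\<in>PiE {..<t} (\<lambda>_. pairs) \<inter> A. \<Prod>s<t. pair_prob (p s))"
    using A by (simp add: Int_absorb1)
  also have "\<dots> = path_expectation t (\<lambda>p. if p \<in> A then 1 else 0)"
    unfolding path_expectation_def sum.inter_restrict[OF finite_paths] by (intro sum.cong) auto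
  finally show ?thesis .
qed

lemma AE_pairs: "AE \<omega> in M. \<forall>t. I t \<omega> \<in> pairs"
proof -
  have "AE \<omega> in M. I t \<omega> \<in> pairs" for t
  proof -
    let ?E = "{\<omega>\<in>space M. I t \<omega> \<in> pairs}"
    have eq: "?E = (\<Union>c\<in>pairs. {\<omega>\<in>space M. I t \<omega> = c})" by auto
    have "prob ?E = (\<Sum>c\<in>pairs. prob {\<omega>\<in>space M. I t \<omega> = c})"
      unfolding eq
    proof (rule measure_finite_Union[OF finite_pairs])
      show "(\<lambda>c. {\<omega>\<in>space M. I t \<omega> = c}) ` pairs \<subseteq> sets M"
        using sets_pair_eq by auto
      show "disjoint_family_on (\<lambda>c. {\<omega>\<in>space M. I t \<omega> = c}) pairs"
        by (auto simp: disjoint_family_on_def)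
    qed (simp add: emeasure_eq_measure)
    also have "\<dots> = 1" by (simp add: prob_pair_eq sum_pair_prob)
    finally have "prob ?E = 1" .
    moreover have "?E \<in> sets M"
      unfolding eq using finite_pairs sets_pair_eq by (intro sets.finite_UN) auto
    ultimately have "AE \<omega> in M. \<omega> \<in> ?E"
      using prob_eq_1 by blast
    then show ?thesis by auto
  qed
  then show ?thesis by (simp add: AE_all_countable)
qed

context
  fixes i
  assumes regular: "i \<notin> S" "i \<in> {1..n1+n2}"
begin

lemma prob_noise_sum_large_le:
  fixes \<delta> :: real and t :: nat
  assumes "\<delta> > 0"
  defines "A \<equiv> {p\<in>PiE {..<t} (\<lambda>_. pairs). \<bar>noise_sum i t p\<bar> > \<delta> * t}"
  shows "prob {\<omega>\<in>space M. restrict (\<lambda>s. I s \<omega>) {..<t} \<in> A}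
           \<le> 10 * noise_bound^4 / \<delta>^4 * inverse (real t ^ 2)"
proof (cases "t = 0")
  case True
  then show ?thesis by (simp add: A_def noise_sum_def)
next
  case False
  then have t: "real t > 0" by simp
  have "prob {\<omega>\<in>space M. restrict (\<lambda>s. I s \<omega>) {..<t} \<in> A}
      = path_expectation t (\<lambda>p. if p \<in> A then 1 else 0)"
    by (rule prob_prefix_in) (auto simp: A_def)
  also have "\<dots> \<le> path_expectation t (\<lambda>p. (noise_sum i t p)^4 / (\<delta> * t)^4)"
  proof (rule path_expectation_mono)
    fix p
    show "(if p \<in> A then 1 else 0) \<le> (noise_sum i t p)^4 / (\<delta> * t)^4"
    proof (cases "p \<in> A")
      case True
      then have "(\<delta> * t)^4 \<le> \<bar>noise_sum i t p\<bar>^4"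
        using \<open>\<delta> > 0\<close> t by (intro power_mono) (auto simp: A_def)
      with True \<open>\<delta> > 0\<close> t show ?thesis by (simp add: power_even_abs)
    qed simp
  qed
  also have "\<dots> = path_expectation t (\<lambda>p. (noise_sum i t p)^4) / (\<delta> * t)^4"
    using path_expectation_cmult[of t "inverse ((\<delta> * t)^4)" "\<lambda>p. (noise_sum i t p)^4"]
    by (simp add: divide_inverse mult.commute)
  also have "\<dots> \<le> 10 * noise_bound^4 * (real t)^2 / (\<delta> * t)^4"
    using noise_sum_fourth_moment[OF regular] \<open>\<delta> > 0\<close> t by (intro divide_right_mono) auto
  also have "\<dots> = 10 * noise_bound^4 / \<delta>^4 * inverse (real t ^ 2)"
    using \<open>\<delta> > 0\<close> t by (simp add: field_simps power_mult_distrib eval_nat_numeral)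
  finally show ?thesis .
qed

lemma AE_eventually_abs_noise_sum_le:
  fixes \<delta> :: real
  assumes "\<delta> > 0"
  shows "AE \<omega> in M. eventually (\<lambda>t. \<bar>noise_sum i t (\<lambda>s. I s \<omega>)\<bar> \<le> \<delta> * t) sequentially"
proof -
  define A where "A t = {p\<in>PiE {..<t} (\<lambda>_. pairs). \<bar>noise_sum i t p\<bar> > \<delta> * t}" for t
  define E where "E t = {\<omega>\<in>space M. restrict (\<lambda>s. I s \<omega>) {..<t} \<in> A t}" for t
  have A_paths: "A t \<subseteq> PiE {..<t} (\<lambda>_. pairs)" for t
    by (auto simp: A_def)
  have E_sets: "E t \<in> sets M" for t
    unfolding E_def prefix_in_eq_Union[OF A_paths]
    using finite_subset[OF A_paths finite_paths] by (intro sets.finite_UN sets_prefix_eq)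
  have "summable (\<lambda>t. measure M (E t))"
  proof (rule summable_comparison_test'[where N = 0])
    show "summable (\<lambda>t. 10 * noise_bound^4 / \<delta>^4 * inverse (real t ^ 2))"
      by (intro summable_mult inverse_power_summable) auto
    show "norm (measure M (E t)) \<le> 10 * noise_bound^4 / \<delta>^4 * inverse (real t ^ 2)" for t
      using prob_noise_sum_large_le[OF assms, of t] by (simp add: E_def A_def)
  qed
  then have "AE \<omega> in M. eventually (\<lambda>t. \<omega> \<in> space M - E t) sequentially"
    by (intro borel_cantelli_AE1 E_sets) (simp add: emeasure_eq_measure)
  with AE_pairs show ?thesis
  proof eventually_elim
    case (elim \<omega>)
    from elim(2) show ?case
    proof (rule eventually_mono)
      fix t
      assume "\<omega> \<in> space M - E t"
      moreover have "noise_sum i t (restrict (\<lambda>s. I s \<omega>) {..<t}) = noise_sum i t (\<lambda>s. I s \<omega>)"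
        by (rule noise_sum_cong_prefix) auto
      ultimately show "\<bar>noise_sum i t (\<lambda>s. I s \<omega>)\<bar> \<le> \<delta> * t"
        using elim(1) by (auto simp: E_def A_def)
    qed
  qed
qed

lemma AE_noise_sum_over_time_tendsto_zero:
  "AE \<omega> in M. (\<lambda>t. noise_sum i t (\<lambda>s. I s \<omega>) / real t) \<longlonglongrightarrow> 0"
proof -
  have "AE \<omega> in M. \<forall>m. eventually
      (\<lambda>t. \<bar>noise_sum i t (\<lambda>s. I s \<omega>)\<bar> \<le> inverse (real (Suc m)) * t) sequentially"
    unfolding AE_all_countable by (intro allI AE_eventually_abs_noise_sum_le) auto
  then show ?thesis
    by eventually_elim (rule LIMSEQ_divide_real_zero, simp add: field_simps)
qed

end

end

section \<open>Time averages along a typical path\<close>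

(* Everything from here on is deterministic: it only uses that the path stays in pairs and
   that the accumulated noise is o(t) along it. *)
locale gossip_sample_path = gossip_weights n1 n2 S ws wd x0 for n1 n2 S ws wd x0 +
  fixes p :: "nat \<Rightarrow> nat \<times> nat"
  assumes path_pairs: "\<And>t. p t \<in> pairs"
    and noise_negligible: "\<And>i. i \<notin> S \<Longrightarrow> i \<in> {1..n1+n2} \<Longrightarrow> (\<lambda>t. noise_sum i t p / real t) \<longlonglongrightarrow> 0"
    and stubborn_subset: "S \<subseteq> {1..n1+n2}"
    and regular_nonempty: "\<And>k. k \<in> {1, 2} \<Longrightarrow> community k - S \<noteq> {}"
    and stubborn_nonempty: "\<And>k. k \<in> {1, 2} \<Longrightarrow> community k \<inter> S \<noteq> {}"
    and ws_ne_wd: "ws \<noteq> wd"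
    and stubborn_means_differ: "(\<Sum>i\<in>community 1 \<inter> S. x0 i) / card (community 1 \<inter> S)
                                 \<noteq> (\<Sum>i\<in>community 2 \<inter> S. x0 i) / card (community 2 \<inter> S)"
begin

abbreviation X :: "nat \<Rightarrow> nat \<Rightarrow> real" where
  "X \<equiv> traj S p x0"

definition regular :: "nat \<Rightarrow> nat set" where
  "regular k = community k - S"

definition stubborn :: "nat \<Rightarrow> nat set" where
  "stubborn k = community k \<inter> S"

definition stubborn_sum :: "nat \<Rightarrow> real" where
  "stubborn_sum k = (\<Sum>i\<in>stubborn k. x0 i)"

definition regular_sum :: "nat \<Rightarrow> nat \<Rightarrow> real" where
  "regular_sum k t = (\<Sum>i\<in>regular k. sr X t i)"

abbreviation nreg :: "nat \<Rightarrow> real" where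
  "nreg k \<equiv> real (card (regular k))"

abbreviation nstub :: "nat \<Rightarrow> real" where
  "nstub k \<equiv> real (card (stubborn k))"

abbreviation ncomm :: "nat \<Rightarrow> real" where
  "ncomm k \<equiv> real (card (community k))"

lemma finite_regular: "finite (regular k)" and finite_stubborn: "finite (stubborn k)"
  by (simp_all add: regular_def stubborn_def finite_community)

lemma card_community_split: "card (community k) = card (regular k) + card (stubborn k)"
  unfolding regular_def stubborn_def using card_Int_Diff[OF finite_community] by (simp add: add.commute)

lemma regular_community: "i \<in> regular k \<Longrightarrow> i \<notin> S \<and> i \<in> {1..n1+n2} \<and> comm n1 i = k"
  unfolding regular_def community_def by auto

lemma sr_stubborn: "k \<in> S \<Longrightarrow> sr X t k = x0 k"
  unfolding sr_eq_mean traj_stubborn by simp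

lemma sum_stubborn_state: "A \<subseteq> S \<Longrightarrow> (\<Sum>i\<in>A. X t i) = (\<Sum>i\<in>A. x0 i)"
  by (intro sum.cong refl traj_stubborn) auto

lemma drift_running_average:
  "drift i (sr X t) = (\<Sum>s\<le>t. drift i (X s)) / real (Suc t)"
proof -
  have "drift i (sr X t) = (\<Sum>j\<in>{1..n1+n2}. \<Sum>s\<le>t. wgt n1 ws wd i j * (X s j - X s i) / real (Suc t))"
    unfolding drift_def sr_eq_mean
    by (intro sum.cong refl)
       (simp add: sum_subtractf[symmetric] sum_distrib_left sum_divide_distrib[symmetric]
         diff_divide_distrib[symmetric])
  also have "\<dots> = (\<Sum>s\<le>t. drift i (X s)) / real (Suc t)"
    unfolding drift_def by (subst sum.swap) (simp add: sum_divide_distrib)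
  finally show ?thesis .
qed

lemma sum_drift_eq: "(\<Sum>s<t. drift i (X s)) = X t i - X 0 i - noise_sum i t p"
proof -
  have "noise_sum i t p = (\<Sum>s<t. X (Suc s) i - X s i) - (\<Sum>s<t. drift i (X s))"
    unfolding noise_sum_def noise_def by (rule sum_subtractf)
  moreover have "(\<Sum>s<t. X (Suc s) i - X s i) = X t i - X 0 i"
    by (rule sum_lessThan_telescope)
  ultimately show ?thesis by linarith
qed

lemma drift_running_average_tendsto_zero:
  assumes "i \<notin> S" "i \<in> {1..n1+n2}"
  shows "(\<lambda>t. drift i (sr X t)) \<longlonglongrightarrow> 0"
proof -
  have X_bound: "\<bar>X t i\<bar> \<le> state_bound" for t
    using path_pairs assms(2) by (intro abs_state_le)
  have bounded: "\<bar>X (Suc t) i - X 0 i\<bar> \<le> 2 * state_bound" for t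
    using X_bound[of "Suc t"] X_bound[of 0] by linarith
  have eq: "drift i (sr X t)
      = (X (Suc t) i - X 0 i) / real (Suc t) - noise_sum i (Suc t) p / real (Suc t)" for t
    unfolding drift_running_average lessThan_Suc_atMost[symmetric] sum_drift_eq
    by (simp add: diff_divide_distrib)
  have "(\<lambda>t. (X (Suc t) i - X 0 i) / real (Suc t)) \<longlonglongrightarrow> 0"
  proof (rule Lim_null_comparison)
    show "eventually (\<lambda>t. norm ((X (Suc t) i - X 0 i) / real (Suc t))
        \<le> 2 * state_bound * inverse (real (Suc t))) sequentially"
      using bounded by (intro always_eventually allI)
        (simp add: divide_inverse abs_mult mult_right_mono del: traj.simps)
    show "(\<lambda>t. 2 * state_bound * inverse (real (Suc t))) \<longlonglongrightarrow> 0"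
      by (intro tendsto_mult_right_zero LIMSEQ_inverse_real_of_nat)
  qed
  moreover have "(\<lambda>t. noise_sum i (Suc t) p / real (Suc t)) \<longlonglongrightarrow> 0"
    using LIMSEQ_Suc[OF noise_negligible[OF assms]] by simp
  ultimately show ?thesis
    unfolding eq using tendsto_diff by fastforce
qed

lemma nreg_pos: "k \<in> {1, 2} \<Longrightarrow> nreg k > 0" and nstub_pos: "k \<in> {1, 2} \<Longrightarrow> nstub k > 0"
  using regular_nonempty stubborn_nonempty finite_regular finite_stubborn
  by (auto simp: regular_def stubborn_def card_gt_0_iff)

lemma real_card_community: "ncomm k = nreg k + nstub k"
  by (simp add: card_community_split)

lemma ncomm_pos: "k \<in> {1, 2} \<Longrightarrow> ncomm k > 0"
  using nreg_pos[of k] nstub_pos[of k] by (simp add: real_card_community)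

lemma community_sum_sr: "(\<Sum>j\<in>community k. sr X t j) = regular_sum k t + stubborn_sum k"
  unfolding regular_sum_def stubborn_sum_def regular_def stubborn_def
  using sum.Int_Diff[OF finite_community, of "sr X t" k S] by (simp add: sr_stubborn add.commute)

definition neighbour_sum :: "nat \<Rightarrow> nat \<Rightarrow> real" where
  "neighbour_sum k t = ws * (regular_sum k t + stubborn_sum k)
     + wd * (regular_sum (other_comm k) t + stubborn_sum (other_comm k))"

lemma drift_sr_eq:
  "i \<in> {1..n1+n2} \<Longrightarrow> drift i (sr X t) = neighbour_sum (comm n1 i) t - degree (comm n1 i) * sr X t i"
  unfolding drift_eq community_sum_sr neighbour_sum_def ..

lemma sum_regular_drift_tendsto_zero:
  "(\<lambda>t. nreg k * neighbour_sum k t - degree k * regular_sum k t) \<longlonglongrightarrow> 0"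
proof -
  have "(\<Sum>i\<in>regular k. drift i (sr X t)) = nreg k * neighbour_sum k t - degree k * regular_sum k t" for t
    using regular_community
    by (simp add: drift_sr_eq sum_subtractf sum_distrib_left regular_sum_def cong: sum.cong)
  moreover have "(\<lambda>t. \<Sum>i\<in>regular k. drift i (sr X t)) \<longlonglongrightarrow> 0"
    using regular_community by (intro tendsto_null_sum drift_running_average_tendsto_zero) auto
  ultimately show ?thesis by simp
qed

lemma regular_sum_linear_tendsto:
  "(\<lambda>t. (nreg k * ws - degree k) * regular_sum k t + nreg k * wd * regular_sum (other_comm k) t)
     \<longlonglongrightarrow> - nreg k * (ws * stubborn_sum k + wd * stubborn_sum (other_comm k))"
proof -
  have "(\<lambda>t. (nreg k * neighbour_sum k t - degree k * regular_sum k t)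
        - nreg k * (ws * stubborn_sum k + wd * stubborn_sum (other_comm k)))
      \<longlonglongrightarrow> 0 - nreg k * (ws * stubborn_sum k + wd * stubborn_sum (other_comm k))"
    by (intro tendsto_diff sum_regular_drift_tendsto_zero tendsto_const)
  then show ?thesis
    by (simp add: neighbour_sum_def algebra_simps)
qed

lemma regular_system_det_pos:
  assumes "k \<in> {1, 2}"
  defines "l \<equiv> other_comm k"
  shows "(nreg k * ws - degree k) * (nreg l * ws - degree l) - nreg k * wd * (nreg l * wd) > 0"
proof -
  have l: "l \<in> {1, 2}" "other_comm l = k"
    using assms other_comm_in other_comm_other_comm by auto
  have pos: "ws * nstub k > 0" "ws * nstub l > 0" "wd * nstub k \<ge> 0" "wd * nstub l \<ge> 0"
    using nstub_pos[OF assms(1)] nstub_pos[OF l(1)] ws_pos wd_pos by auto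
  have "wd * nreg l < ws * nstub k + wd * ncomm l"
    using pos unfolding real_card_community by (simp add: distrib_left)
  moreover have "wd * nreg k < ws * nstub l + wd * ncomm k"
    using pos unfolding real_card_community by (simp add: distrib_left)
  ultimately have "(wd * nreg l) * (wd * nreg k)
      < (ws * nstub k + wd * ncomm l) * (ws * nstub l + wd * ncomm k)"
    using wd_pos pos by (intro mult_strict_mono) (auto intro: add_pos_nonneg)
  then show ?thesis
    unfolding degree_def l(2) l_def[symmetric] by (simp add: real_card_community algebra_simps)
qed

lemma regular_sum_convergent:
  assumes "k \<in> {1, 2}"
  shows "convergent (regular_sum k)"
proof (rule convergent_of_linear_system)
  let ?o = "other_comm k"
  show "(\<lambda>t. (nreg k * ws - degree k) * regular_sum k t + nreg k * wd * regular_sum ?o t)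
      \<longlonglongrightarrow> - nreg k * (ws * stubborn_sum k + wd * stubborn_sum ?o)"
    by (rule regular_sum_linear_tendsto)
  show "(\<lambda>t. nreg ?o * wd * regular_sum k t + (nreg ?o * ws - degree ?o) * regular_sum ?o t)
      \<longlonglongrightarrow> - nreg ?o * (ws * stubborn_sum ?o + wd * stubborn_sum k)"
    using regular_sum_linear_tendsto[of ?o] other_comm_other_comm[OF assms] by (simp add: add.commute)
  show "(nreg k * ws - degree k) * (nreg ?o * ws - degree ?o) - nreg k * wd * (nreg ?o * wd) \<noteq> 0"
    using regular_system_det_pos[OF assms] by simp
qed

lemma degree_pos: "k \<in> {1, 2} \<Longrightarrow> degree k > 0"
  using nreg_pos[of k] ws_pos wd_pos
  unfolding degree_def real_card_community by (intro add_pos_nonneg) auto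

(* Solving  drift i = 0  for a regular agent i of community k, at the limits of the community sums. *)
definition regular_limit :: "nat \<Rightarrow> real" where
  "regular_limit k = (ws * (lim (regular_sum k) + stubborn_sum k)
      + wd * (lim (regular_sum (other_comm k)) + stubborn_sum (other_comm k))) / degree k"

lemma neighbour_sum_tendsto:
  assumes "k \<in> {1, 2}"
  shows "neighbour_sum k \<longlonglongrightarrow> degree k * regular_limit k"
proof -
  have "neighbour_sum k \<longlonglongrightarrow> ws * (lim (regular_sum k) + stubborn_sum k)
      + wd * (lim (regular_sum (other_comm k)) + stubborn_sum (other_comm k))"
    unfolding neighbour_sum_def[abs_def]
    using regular_sum_convergent[OF assms] regular_sum_convergent[OF other_comm_in[OF assms]]
    by (intro tendsto_intros) (auto simp: convergent_LIMSEQ_iff)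
  then show ?thesis
    using degree_pos[OF assms] by (simp add: regular_limit_def)
qed

lemma sr_regular_tendsto:
  assumes i: "i \<in> regular k" and k: "k \<in> {1, 2}"
  shows "(\<lambda>t. sr X t i) \<longlonglongrightarrow> regular_limit k"
proof -
  have i': "i \<notin> S" "i \<in> {1..n1+n2}" "comm n1 i = k"
    using regular_community[OF i] by auto
  have "sr X t i = (neighbour_sum k t - drift i (sr X t)) / degree k" for t
    using drift_sr_eq[OF i'(2), of t] degree_pos[OF k] by (simp add: i'(3) field_simps)
  moreover have "(\<lambda>t. (neighbour_sum k t - drift i (sr X t)) / degree k)
      \<longlonglongrightarrow> (degree k * regular_limit k - 0) / degree k"
    using degree_pos[OF k]
    by (intro tendsto_intros neighbour_sum_tendsto drift_running_average_tendsto_zero k i') auto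
  ultimately show ?thesis
    using degree_pos[OF k] by simp
qed

lemma lim_regular_sum:
  assumes "k \<in> {1, 2}"
  shows "lim (regular_sum k) = nreg k * regular_limit k"
proof -
  have "regular_sum k \<longlonglongrightarrow> (\<Sum>i\<in>regular k. regular_limit k)"
    unfolding regular_sum_def[abs_def] by (intro tendsto_sum sr_regular_tendsto assms)
  then show ?thesis
    by (simp add: limI)
qed

lemma regular_sum_tendsto: "k \<in> {1, 2} \<Longrightarrow> regular_sum k \<longlonglongrightarrow> nreg k * regular_limit k"
  using regular_sum_convergent lim_regular_sum by (metis convergent_LIMSEQ_iff)

lemma regular_limit_balance:
  assumes "k \<in> {1, 2}"
  defines "l \<equiv> other_comm k"
  shows "(ws * nstub k + wd * ncomm l) * regular_limit k
      = wd * nreg l * regular_limit l + ws * stubborn_sum k + wd * stubborn_sum l"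
proof -
  have "degree k * regular_limit k
      = ws * (lim (regular_sum k) + stubborn_sum k) + wd * (lim (regular_sum l) + stubborn_sum l)"
    using degree_pos[OF assms(1)] by (simp add: regular_limit_def l_def)
  also have "\<dots> = ws * (nreg k * regular_limit k + stubborn_sum k)
      + wd * (nreg l * regular_limit l + stubborn_sum l)"
    unfolding l_def lim_regular_sum[OF assms(1)] lim_regular_sum[OF other_comm_in[OF assms(1)]] ..
  finally show ?thesis
    unfolding degree_def l_def[symmetric] real_card_community[of k] by (simp add: algebra_simps)
qed

lemma regular_limits_differ: "regular_limit 1 \<noteq> regular_limit 2"
proof
  assume same: "regular_limit 1 = regular_limit 2"
  define a where "a = regular_limit 1"
  define D where "D k = nstub k * a - stubborn_sum k" for k
  have balance1: "ws * D 1 + wd * D 2 = 0"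
    using regular_limit_balance[of 1] same real_card_community[of 2]
    unfolding D_def a_def other_comm_simps by (simp add: algebra_simps)
  have balance2: "ws * D 2 + wd * D 1 = 0"
    using regular_limit_balance[of 2] same real_card_community[of 1]
    unfolding D_def a_def other_comm_simps by (simp add: algebra_simps)
  have "(ws - wd) * (ws + wd) * D 1 = ws * (ws * D 1 + wd * D 2) - wd * (ws * D 2 + wd * D 1)"
    by (simp add: algebra_simps)
  then have "D 1 = 0"
    using balance1 balance2 ws_ne_wd ws_pos wd_pos by simp
  then have "D 2 = 0"
    using balance1 wd_pos by simp
  have mean: "stubborn_sum k / nstub k = a" if "k \<in> {1, 2}" "D k = 0" for k
    using nstub_pos[OF that(1)] that(2) unfolding D_def by (simp add: field_simps)
  have "stubborn_sum 1 / nstub 1 = stubborn_sum 2 / nstub 2"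
    using mean[of 1] mean[of 2] \<open>D 1 = 0\<close> \<open>D 2 = 0\<close> by simp
  then show False
    using stubborn_means_differ unfolding stubborn_sum_def stubborn_def by simp
qed

lemma regular_limit_other_ne: "k \<in> {1, 2} \<Longrightarrow> regular_limit (other_comm k) \<noteq> regular_limit k"
  using regular_limits_differ by auto

(* The community with the larger limit; the algorithm eventually gives it label 1. *)
definition leader :: nat where
  "leader = (if regular_limit 2 < regular_limit 1 then 1 else 2)"

lemma leader_in: "leader \<in> {1, 2}"
  by (simp add: leader_def)

lemma leader_dominates: "regular_limit (other_comm leader) < regular_limit leader"
  using regular_limits_differ by (auto simp: leader_def)

lemma comm_ne_leader_iff: "comm n1 i \<noteq> leader \<longleftrightarrow> comm n1 i = other_comm leader"
  using comm_cases[of n1 i] leader_in by (auto simp: other_comm_def)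

definition regular_mean :: real where
  "regular_mean = (\<Sum>l\<in>{1, 2}. nreg l * regular_limit l) / (\<Sum>l\<in>{1, 2}. nreg l)"

lemma Vreg_eq: "Vreg (n1+n2) S = regular 1 \<union> regular 2"
  and regular_disjoint: "regular 1 \<inter> regular 2 = {}"
  unfolding Vreg_def regular_def using community_partition[of 1] by auto

lemma sbar_tendsto: "(\<lambda>t. sbar (n1+n2) S X t) \<longlonglongrightarrow> regular_mean"
proof -
  have "sbar (n1+n2) S X t = (\<Sum>l\<in>{1, 2}. regular_sum l t) / (\<Sum>l\<in>{1, 2}. nreg l)" for t
    unfolding sbar_def Vreg_eq regular_sum_def
    using finite_regular regular_disjoint by (simp add: sum.union_disjoint card_Un_disjoint)
  moreover have "(\<lambda>t. (\<Sum>l\<in>{1, 2}. regular_sum l t) / (\<Sum>l\<in>{1, 2}. nreg l)) \<longlonglongrightarrow> regular_mean"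
    unfolding regular_mean_def using nreg_pos[of 1] nreg_pos[of 2]
    by (intro tendsto_intros regular_sum_tendsto) auto
  ultimately show ?thesis by simp
qed

lemma regular_limit_minus_mean:
  assumes "k \<in> {1, 2}"
  shows "regular_limit k - regular_mean
      = nreg (other_comm k) * (regular_limit k - regular_limit (other_comm k))
        / (nreg k + nreg (other_comm k))"
  using nreg_pos[OF assms] nreg_pos[OF other_comm_in[OF assms]]
  unfolding regular_mean_def sum_pair_other_comm[OF assms] by (simp add: field_simps)

lemma eventually_sr_gt_sbar_iff:
  assumes i: "i \<in> regular k" and k: "k \<in> {1, 2}"
  shows "eventually (\<lambda>t. sr X t i > sbar (n1+n2) S X t \<longleftrightarrow> k = leader) sequentially"
proof -
  have gap: "(\<lambda>t. sr X t i - sbar (n1+n2) S X t) \<longlonglongrightarrow> regular_limit k - regular_mean"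
    by (intro tendsto_diff sr_regular_tendsto[OF i k] sbar_tendsto)
  show ?thesis
  proof (cases "k = leader")
    case True
    then have "regular_limit k - regular_mean > 0"
      unfolding regular_limit_minus_mean[OF k]
      using leader_dominates nreg_pos[OF k] nreg_pos[OF other_comm_in[OF k]]
      by (intro divide_pos_pos mult_pos_pos add_pos_pos) auto
    from order_tendstoD(1)[OF gap this] show ?thesis
      by eventually_elim (use True in simp)
  next
    case False
    then have "other_comm k = leader" "k = other_comm leader"
      using k leader_in by (auto simp: other_comm_def)
    then have "regular_limit k - regular_mean < 0"
      unfolding regular_limit_minus_mean[OF k]
      using leader_dominates nreg_pos[OF k] nreg_pos[OF other_comm_in[OF k]]
      by (intro divide_neg_pos mult_pos_neg add_pos_pos) auto
    from order_tendstoD(2)[OF gap this] show ?thesis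
      by eventually_elim (use False in simp)
  qed
qed

lemma eventually_regular_above_sbar_iff:
  "eventually (\<lambda>t. \<forall>i\<in>regular 1 \<union> regular 2.
     sr X t i > sbar (n1+n2) S X t \<longleftrightarrow> comm n1 i = leader) sequentially"
proof -
  have sign: "eventually (\<lambda>t. sr X t i > sbar (n1+n2) S X t \<longleftrightarrow> comm n1 i = leader) sequentially"
    if "i \<in> regular k" "k \<in> {1, 2}" for i k
    using eventually_sr_gt_sbar_iff[OF that] regular_community[OF that(1)] by simp
  have "\<forall>i\<in>regular 1 \<union> regular 2.
      eventually (\<lambda>t. sr X t i > sbar (n1+n2) S X t \<longleftrightarrow> comm n1 i = leader) sequentially"
    using sign[of _ 1] sign[of _ 2] by auto
  then show ?thesis
    using finite_regular by (intro eventually_ball_finite) auto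
qed

lemma weights_normalized_comm:
  assumes "k \<in> {1, 2}"
  shows "ws * (ncomm k ^ 2 + ncomm (other_comm k) ^ 2) + 2 * wd * ncomm k * ncomm (other_comm k) = 1"
  using assms weights_normalized card_community by (auto simp: algebra_simps)

lemma ws_le_half: "ws \<le> 1/2"
proof -
  have "n1 \<ge> 1" "n2 \<ge> 1"
    using nreg_pos[of 1] nreg_pos[of 2] card_community
      card_community_split[of 1] card_community_split[of 2]
    by simp_all
  then have "1 \<le> real n1 ^ 2" "1 \<le> real n2 ^ 2"
    by simp_all
  then have "ws * 2 \<le> ws * (real n1 ^ 2 + real n2 ^ 2)"
    using ws_pos by (intro mult_left_mono) auto
  moreover have "2 * wd * real n1 * real n2 \<ge> 0"
    using wd_pos by simp
  ultimately show ?thesis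
    using weights_normalized by simp
qed

(* Limits of beta1, beta2, g and beta2 / (2 n1_hat n2_hat) once community k carries label 1. *)
definition beta1_limit :: "nat \<Rightarrow> real" where
  "beta1_limit k = nstub k * regular_limit k - stubborn_sum k"

definition beta2_limit :: "nat \<Rightarrow> real" where
  "beta2_limit k = ncomm (other_comm k) * regular_limit k
     - nreg (other_comm k) * regular_limit (other_comm k) - stubborn_sum (other_comm k)"

definition g_limit :: "nat \<Rightarrow> real" where
  "g_limit k = beta1_limit k
     - (ncomm k ^ 2 + ncomm (other_comm k) ^ 2) / (2 * ncomm k * ncomm (other_comm k)) * beta2_limit k"

definition h_limit :: "nat \<Rightarrow> real" where
  "h_limit k = beta2_limit k / (2 * ncomm k * ncomm (other_comm k))"

lemma beta_limits_balance: "k \<in> {1, 2} \<Longrightarrow> ws * beta1_limit k + wd * beta2_limit k = 0"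
  using regular_limit_balance[of k]
  unfolding beta1_limit_def beta2_limit_def by (simp add: algebra_simps)

lemma g_limit_root:
  assumes "k \<in> {1, 2}"
  shows "g_limit k * ws + h_limit k = 0"
proof -
  let ?a = "ncomm k" and ?b = "ncomm (other_comm k)"
  have pos: "?a > 0" "?b > 0"
    using ncomm_pos assms other_comm_in by auto
  have wd_eq: "wd = (1 - ws * (?a^2 + ?b^2)) / (2 * ?a * ?b)"
    using weights_normalized_comm[OF assms] pos by (simp add: field_simps)
  have "g_limit k * ws + h_limit k
      = ws * beta1_limit k + beta2_limit k * ((1 - ws * (?a^2 + ?b^2)) / (2 * ?a * ?b))"
    unfolding g_limit_def h_limit_def using pos by (simp add: field_simps)
  also have "\<dots> = ws * beta1_limit k + wd * beta2_limit k"
    by (simp add: wd_eq mult.commute)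
  finally show ?thesis
    using beta_limits_balance[OF assms] by simp
qed

lemma g_limit_nonzero:
  assumes k: "k \<in> {1, 2}"
  shows "g_limit k \<noteq> 0"
proof
  let ?o = "other_comm k"
  assume "g_limit k = 0"
  then have "h_limit k = 0"
    using g_limit_root[OF k] by simp
  then have "beta2_limit k = 0" "beta1_limit k = 0"
    using \<open>g_limit k = 0\<close> ncomm_pos[OF k] ncomm_pos[OF other_comm_in[OF k]]
    by (auto simp: h_limit_def g_limit_def)
  then have \<sigma>: "stubborn_sum k = nstub k * regular_limit k"
    "stubborn_sum ?o = ncomm ?o * regular_limit k - nreg ?o * regular_limit ?o"
    unfolding beta1_limit_def beta2_limit_def by simp_all
  have balance: "(ws * nstub ?o + wd * ncomm k) * regular_limit ?o
      = wd * nreg k * regular_limit k + ws * (ncomm ?o * regular_limit k - nreg ?o * regular_limit ?o)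
        + wd * (nstub k * regular_limit k)"
    using regular_limit_balance[OF other_comm_in[OF k]] unfolding other_comm_other_comm[OF k] \<sigma> .
  have "(ws * ncomm ?o + wd * ncomm k) * (regular_limit ?o - regular_limit k)
      = (ws * nstub ?o + wd * ncomm k) * regular_limit ?o
        - (wd * nreg k * regular_limit k + ws * (ncomm ?o * regular_limit k - nreg ?o * regular_limit ?o)
           + wd * (nstub k * regular_limit k))"
    by (simp add: real_card_community algebra_simps)
  then have "(ws * ncomm ?o + wd * ncomm k) * (regular_limit ?o - regular_limit k) = 0"
    using balance by simp
  moreover have "ws * ncomm ?o + wd * ncomm k > 0"
    using ncomm_pos[OF k] ncomm_pos[OF other_comm_in[OF k]] ws_pos wd_pos by (simp add: add_pos_pos)
  ultimately show False
    using regular_limit_other_ne[OF k] by simp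
qed


end

section \<open>Community detection and parameter estimation\<close>

locale gossip_detection = gossip_sample_path n1 n2 S ws wd x0 p for n1 n2 S ws wd x0 p +
  fixes j :: "nat \<Rightarrow> nat"
  assumes anchor: "\<And>i. i \<in> S \<Longrightarrow> j i \<in> {1..n1+n2} - S \<and> comm n1 (j i) = comm n1 i"
begin

lemma eventually_Chat_eq:
  "eventually (\<lambda>t. \<forall>i\<in>{1..n1+n2}. Chat (n1+n2) S j C0 X t i = (if comm n1 i = leader then 1 else 2))
     sequentially"
proof -
  have "eventually (\<lambda>t. t > 0) sequentially"
    by (rule eventually_gt_at_top)
  with eventually_regular_above_sbar_iff show ?thesis
  proof eventually_elim
    case (elim t)
    have regular: "Chat (n1+n2) S j C0 X t i = (if comm n1 i = leader then 1 else 2)"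
      if "i \<in> {1..n1+n2}" "i \<notin> S" for i
    proof -
      have "i \<in> regular 1 \<union> regular 2"
        using that Vreg_eq unfolding Vreg_def by blast
      then have "sr X t i > sbar (n1+n2) S X t \<longleftrightarrow> comm n1 i = leader"
        using elim(1) by blast
      then show ?thesis
        using elim(2) that(2) by (simp add: Chat_def)
    qed
    show ?case
    proof
      fix i
      assume i: "i \<in> {1..n1+n2}"
      show "Chat (n1+n2) S j C0 X t i = (if comm n1 i = leader then 1 else 2)"
      proof (cases "i \<in> S")
        case True
        then have "Chat (n1+n2) S j C0 X t i = Chat (n1+n2) S j C0 X t (j i)"
          using anchor[OF True] elim by (simp add: Chat_def)
        with True show ?thesis
          using regular[of "j i"] anchor[OF True] by simp
      qed (use regular i in simp)
    qed
  qed
qed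

lemma community_detection:
  "\<exists>T \<pi>. \<pi> permutes {1::nat, 2} \<and> (\<forall>i\<in>{1..n1+n2}. \<forall>t\<ge>T. Chat (n1+n2) S j C0 X t i = \<pi> (comm n1 i))"
proof -
  define \<pi> where "\<pi> = (if leader = 1 then id else Transposition.transpose (1::nat) 2)"
  have "\<pi> permutes {1, 2}"
    unfolding \<pi>_def by (auto intro: permutes_swap_id)
  moreover have "\<pi> (comm n1 i) = (if comm n1 i = leader then 1 else 2)" for i
    using leader_in comm_cases[of n1 i] by (auto simp: \<pi>_def)
  moreover obtain T where "\<And>t. t \<ge> T \<Longrightarrow>
      \<forall>i\<in>{1..n1+n2}. Chat (n1+n2) S j C0 X t i = (if comm n1 i = leader then 1 else 2)"
    using eventually_Chat_eq[of C0] unfolding eventually_sequentially by blast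
  ultimately show ?thesis
    by (intro exI[of _ T] exI[of _ \<pi>]) simp
qed

abbreviation (input) other_leader :: nat where
  "other_leader \<equiv> other_comm leader"

lemma eventually_estimated_communities:
  "eventually (\<lambda>t.
       hVr (n1+n2) S j C0 X t 1 = regular leader \<and> hVs (n1+n2) S j C0 X t 1 = stubborn leader
     \<and> hVr (n1+n2) S j C0 X t 2 = regular other_leader \<and> hVs (n1+n2) S j C0 X t 2 = stubborn other_leader
     \<and> nhat (n1+n2) S j C0 X t 1 = ncomm leader \<and> nhat (n1+n2) S j C0 X t 2 = ncomm other_leader)
     sequentially"
  using eventually_Chat_eq[of C0]
proof eventually_elim
  case (elim t)
  let ?Chat = "Chat (n1+n2) S j C0 X t"
  have "(?Chat i = 1 \<longleftrightarrow> comm n1 i = leader) \<and> (?Chat i = 2 \<longleftrightarrow> comm n1 i = other_comm leader)"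
    if "i \<in> {1..n1+n2}" for i
    using elim that comm_ne_leader_iff[of i] by auto
  then have label: "{i\<in>A. ?Chat i = 1} = {i\<in>A. comm n1 i = leader}"
      "{i\<in>A. ?Chat i = 2} = {i\<in>A. comm n1 i = other_comm leader}"
    if "A \<subseteq> {1..n1+n2}" for A
    using that by blast+
  have Vreg_sub: "Vreg (n1+n2) S \<subseteq> {1..n1+n2}"
    by (auto simp: Vreg_def)
  have "{i\<in>Vreg (n1+n2) S. comm n1 i = k} = regular k" for k
    by (auto simp: Vreg_def regular_def community_def)
  moreover have "{i\<in>S. comm n1 i = k} = stubborn k" for k
    using stubborn_subset by (auto simp: stubborn_def community_def)
  ultimately show ?case
    unfolding hVr_def hVs_def nhat_def
      label[OF order_refl] label[OF stubborn_subset] label[OF Vreg_sub]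
    by (simp add: community_def)
qed

lemma beta1_tendsto: "(\<lambda>t. beta1 (n1+n2) S j C0 X t) \<longlonglongrightarrow> beta1_limit leader"
proof (rule Lim_transform_eventually)
  have "(\<lambda>t. nstub leader / nreg leader * regular_sum leader t - stubborn_sum leader)
      \<longlonglongrightarrow> nstub leader / nreg leader * (nreg leader * regular_limit leader) - stubborn_sum leader"
    by (intro tendsto_intros regular_sum_tendsto leader_in)
  then show "(\<lambda>t. nstub leader / nreg leader * regular_sum leader t - stubborn_sum leader)
      \<longlonglongrightarrow> beta1_limit leader"
    using nreg_pos[OF leader_in] by (simp add: beta1_limit_def)
  show "eventually (\<lambda>t. nstub leader / nreg leader * regular_sum leader t - stubborn_sum leader
      = beta1 (n1+n2) S j C0 X t) sequentially"
    using eventually_estimated_communities[of C0]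
    by eventually_elim
      (simp add: beta1_def regular_sum_def stubborn_sum_def sum_stubborn_state stubborn_def)
qed

lemma beta2_tendsto: "(\<lambda>t. beta2 (n1+n2) S j C0 X t) \<longlonglongrightarrow> beta2_limit leader"
proof (rule Lim_transform_eventually)
  have "(\<lambda>t. ncomm other_leader / nreg leader * regular_sum leader t - regular_sum other_leader t
      - stubborn_sum other_leader)
      \<longlonglongrightarrow> ncomm other_leader / nreg leader * (nreg leader * regular_limit leader)
        - nreg other_leader * regular_limit other_leader - stubborn_sum other_leader"
    by (intro tendsto_intros regular_sum_tendsto leader_in other_comm_in)
  then show "(\<lambda>t. ncomm other_leader / nreg leader * regular_sum leader t - regular_sum other_leader t
      - stubborn_sum other_leader) \<longlonglongrightarrow> beta2_limit leader"
    using nreg_pos[OF leader_in] by (simp add: beta2_limit_def)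
  show "eventually (\<lambda>t. ncomm other_leader / nreg leader * regular_sum leader t
      - regular_sum other_leader t - stubborn_sum other_leader = beta2 (n1+n2) S j C0 X t) sequentially"
    using eventually_estimated_communities[of C0]
    by eventually_elim
      (simp add: beta2_def regular_sum_def stubborn_sum_def sum_stubborn_state stubborn_def)
qed

lemma gfun_tendsto: "(\<lambda>t. gfun (n1+n2) S j C0 X t) \<longlonglongrightarrow> g_limit leader"
proof (rule Lim_transform_eventually)
  show "(\<lambda>t. beta1 (n1+n2) S j C0 X t - (ncomm leader ^ 2 + ncomm other_leader ^ 2)
      / (2 * ncomm leader * ncomm other_leader) * beta2 (n1+n2) S j C0 X t) \<longlonglongrightarrow> g_limit leader"
    unfolding g_limit_def by (intro tendsto_intros beta1_tendsto beta2_tendsto)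
  show "eventually (\<lambda>t. beta1 (n1+n2) S j C0 X t - (ncomm leader ^ 2 + ncomm other_leader ^ 2)
      / (2 * ncomm leader * ncomm other_leader) * beta2 (n1+n2) S j C0 X t = gfun (n1+n2) S j C0 X t)
      sequentially"
    using eventually_estimated_communities[of C0] by eventually_elim (simp add: gfun_def)
qed

lemma normalized_beta2_tendsto:
  "(\<lambda>t. beta2 (n1+n2) S j C0 X t / (2 * nhat (n1+n2) S j C0 X t 1 * nhat (n1+n2) S j C0 X t 2))
     \<longlonglongrightarrow> h_limit leader"
proof (rule Lim_transform_eventually)
  show "(\<lambda>t. beta2 (n1+n2) S j C0 X t / (2 * ncomm leader * ncomm other_leader)) \<longlonglongrightarrow> h_limit leader"
    unfolding h_limit_def using ncomm_pos[OF leader_in] ncomm_pos[OF other_comm_in[OF leader_in]]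
    by (intro tendsto_intros beta2_tendsto) auto
  show "eventually (\<lambda>t. beta2 (n1+n2) S j C0 X t / (2 * ncomm leader * ncomm other_leader)
      = beta2 (n1+n2) S j C0 X t / (2 * nhat (n1+n2) S j C0 X t 1 * nhat (n1+n2) S j C0 X t 2))
      sequentially"
    using eventually_estimated_communities[of C0] by eventually_elim simp
qed

lemma ws_hat_tendsto: "(\<lambda>t. ws_hat (n1+n2) S j C0 ws0 X t) \<longlonglongrightarrow> ws"
  using ws_pos ws_le_half
  by (intro clipped_robbins_monro_tendsto[OF _ gfun_tendsto g_limit_nonzero[OF leader_in]
        normalized_beta2_tendsto g_limit_root[OF leader_in]])
     (auto simp: Let_def)

lemma wd_hat_tendsto: "(\<lambda>t. wd_hat (n1+n2) S j C0 ws0 wd0 X t) \<longlonglongrightarrow> wd"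
proof (rule Lim_transform_eventually)
  let ?q = "ncomm leader ^ 2 + ncomm other_leader ^ 2" and ?r = "2 * ncomm leader * ncomm other_leader"
  have "(\<lambda>t. (1 - ?q * ws_hat (n1+n2) S j C0 ws0 X t) / ?r) \<longlonglongrightarrow> (1 - ?q * ws) / ?r"
    using ncomm_pos[OF leader_in] ncomm_pos[OF other_comm_in[OF leader_in]]
    by (intro tendsto_intros ws_hat_tendsto) auto
  moreover have "(1 - ?q * ws) / ?r = wd"
    using weights_normalized_comm[OF leader_in]
      ncomm_pos[OF leader_in] ncomm_pos[OF other_comm_in[OF leader_in]]
    by (simp add: field_simps)
  ultimately show "(\<lambda>t. (1 - ?q * ws_hat (n1+n2) S j C0 ws0 X t) / ?r) \<longlonglongrightarrow> wd"
    by simp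
  show "eventually (\<lambda>t. (1 - ?q * ws_hat (n1+n2) S j C0 ws0 X t) / ?r
      = wd_hat (n1+n2) S j C0 ws0 wd0 X t) sequentially"
    using eventually_conj[OF eventually_estimated_communities[of C0] eventually_gt_at_top[of 0]]
    by eventually_elim (simp add: wd_hat_def)
qed

end

lemma (in gossip_process) AE_gossip_detection:
  assumes "S \<subseteq> {1..n1+n2}"
    and "\<And>k. k \<in> {1, 2} \<Longrightarrow> community k - S \<noteq> {}" and "\<And>k. k \<in> {1, 2} \<Longrightarrow> community k \<inter> S \<noteq> {}"
    and "ws \<noteq> wd"
    and "(\<Sum>i\<in>community 1 \<inter> S. x0 i) / card (community 1 \<inter> S)
           \<noteq> (\<Sum>i\<in>community 2 \<inter> S. x0 i) / card (community 2 \<inter> S)"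
    and "\<And>i. i \<in> S \<Longrightarrow> j i \<in> {1..n1+n2} - S \<and> comm n1 (j i) = comm n1 i"
  shows "AE \<omega> in M. gossip_detection n1 n2 S ws wd x0 (\<lambda>s. I s \<omega>) j"
proof -
  have "AE \<omega> in M. \<forall>i\<in>{1..n1+n2} - S. (\<lambda>t. noise_sum i t (\<lambda>s. I s \<omega>) / real t) \<longlonglongrightarrow> 0"
    by (intro eventually_ball_finite ballI AE_noise_sum_over_time_tendsto_zero) auto
  with AE_pairs show ?thesis
  proof eventually_elim
    case (elim \<omega>)
    then show ?case
      using gossip_weights_axioms assms
      by (intro gossip_detection.intro gossip_sample_path.intro gossip_sample_path_axioms.intro
          gossip_detection_axioms.intro) auto
  qed
qed

theorem theorem5:
  fixes M :: "'w measure"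
    and I :: "nat \<Rightarrow> 'w \<Rightarrow> nat \<times> nat"
    and n1 n2 :: nat and S :: "nat set" and ws wd :: real
    and x0 :: "nat \<Rightarrow> real" and j :: "nat \<Rightarrow> nat"
    and C0 :: "nat \<Rightarrow> nat" and ws0 wd0 :: real
  defines "n \<equiv> n1 + n2"
  defines "X \<equiv> (\<lambda>\<omega> t. traj S (\<lambda>s. I s \<omega>) x0 t)"
  assumes "prob_space M"
    and "prob_space.indep_vars M (\<lambda>_. count_space UNIV) I UNIV"
    and "\<And>t a b. a \<in> {1..n} \<Longrightarrow> b \<in> {1..n} \<Longrightarrow>
           measure M {\<omega>\<in>space M. I t \<omega> = (a, b)} = wgt n1 ws wd a b"
    and "S \<subseteq> {1..n}"
    and "card ({1..n1} - S) > 0" and "card ({n1+1..n} - S) > 0"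
    and "card ({1..n1} \<inter> S) > 0" and "card ({n1+1..n} \<inter> S) > 0"
    and "ws > 0" and "wd > 0" and "ws \<noteq> wd"
    and "ws * (real n1 ^ 2 + real n2 ^ 2) + 2 * wd * real n1 * real n2 = 1"
    and "(\<Sum>i\<in>{1..n1} \<inter> S. x0 i) / real (card ({1..n1} \<inter> S))
         \<noteq> (\<Sum>i\<in>{n1+1..n} \<inter> S. x0 i) / real (card ({n1+1..n} \<inter> S))"
    and "\<And>i. i \<in> S \<Longrightarrow> j i \<in> {1..n} - S \<and> comm n1 (j i) = comm n1 i"
  shows "(AE \<omega> in M. \<exists>T. \<exists>\<pi>. \<pi> permutes {1::nat, 2} \<and>
            (\<forall>i\<in>{1..n}. \<forall>t\<ge>T. Chat n S j C0 (X \<omega>) t i = \<pi> (comm n1 i)))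
       \<and> (AE \<omega> in M. ((\<lambda>t. (ws_hat n S j C0 ws0 (X \<omega>) t, wd_hat n S j C0 ws0 wd0 (X \<omega>) t))
                        \<longlonglongrightarrow> (ws, wd)))"
proof -
  interpret gossip_process n1 n2 S ws wd x0 M I
    using assms unfolding n_def
    by (intro gossip_process.intro gossip_weights.intro gossip_process_axioms.intro)
  have "community 1 - S \<noteq> {}" "community 2 - S \<noteq> {}" "community 1 \<inter> S \<noteq> {}" "community 2 \<inter> S \<noteq> {}"
    using assms(7-10) unfolding community_simps n_def by (auto simp: card_gt_0_iff)
  then have nonempty: "community k - S \<noteq> {}" "community k \<inter> S \<noteq> {}" if "k \<in> {1, 2}" for k
    using that by auto
  have "(\<Sum>i\<in>community 1 \<inter> S. x0 i) / card (community 1 \<inter> S)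
      \<noteq> (\<Sum>i\<in>community 2 \<inter> S. x0 i) / card (community 2 \<inter> S)"
    using assms(15) unfolding community_simps n_def .
  then have "AE \<omega> in M. gossip_detection n1 n2 S ws wd x0 (\<lambda>s. I s \<omega>) j"
    using assms(6,13,16) nonempty unfolding n_def by (intro AE_gossip_detection)
  then have "AE \<omega> in M. (\<exists>T \<pi>. \<pi> permutes {1::nat, 2} \<and>
        (\<forall>i\<in>{1..n}. \<forall>t\<ge>T. Chat n S j C0 (X \<omega>) t i = \<pi> (comm n1 i)))
      \<and> (\<lambda>t. (ws_hat n S j C0 ws0 (X \<omega>) t, wd_hat n S j C0 ws0 wd0 (X \<omega>) t)) \<longlonglongrightarrow> (ws, wd)"
  proof eventually_elim
    case (elim \<omega>)
    then interpret gossip_detection n1 n2 S ws wd x0 "\<lambda>s. I s \<omega>" j .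
    show ?case
      unfolding X_def n_def
      using community_detection ws_hat_tendsto wd_hat_tendsto by (auto intro: tendsto_Pair)
  qed
  then show ?thesis
    by (simp add: eventually_conj_iff)
qed

end
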